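(* Let $(R,\cdot_\lambda\cdot,\alpha,\beta)$ be a regular BiHom-associative conformal superalgebra (so $\alpha,\beta$ are bijective and even). Then the $\lambda$-bracket $$[a_\lambda b]=a_\lambda b-(-1)^{|a||b|}\,\alpha^{-1}\beta(b)_{-\lambda-\partial}\,\alpha\beta^{-1}(a),\qquad a,b\in R \text{ homogeneous},$$ defines a BiHom-Lie conformal superalgebra structure $(R,[\cdot_\lambda\cdot],\alpha,\beta)$ on $R$.
   Context: All spaces are over $\mathbb{C}$. For a $\mathbb{C}[\partial]$-module $V$, $V[\lambda]=\mathbb{C}[\lambda]\otimes V$. $|a|$ denotes the parity of a homogeneous element. In $x_{-\lambda-\partial}y$ one writes $x_\lambda y=\sum_n\lambda^nc_n$ and replaces $\lambda$ by $-\lambda-\partial$, $\partial$ acting on the $c_n$. A BiHom-associative conformal superalgebra is a $\mathbb{Z}_2$-graded $\mathbb{C}[\partial]$-module $R=R_0\oplus R_1$ with two commuting even linear maps $\alpha,\beta:R\to R$ and a $\mathbb{C}$-linear $\lambda$-product $R\otimes R\to R[\lambda]$, $a\otimes b\mapsto a_\lambda b$, with $R_{i\,\lambda}R_j\subseteq R_{i+j}[\lambda]$, such that for all $a,b,c\in R$: $(\partial a)_\lambda b=-\lambda\, a_\lambda b$, $a_\lambda(\partial b)=(\partial+\lambda)a_\lambda b$; $\alpha\partial=\partial\alpha$, $\beta\partial=\partial\beta$; $\alpha(a_\lambda b)=\alpha(a)_\lambda\alpha(b)$, $\beta(a_\lambda b)=\beta(a)_\lambda\beta(b)$; and $\alpha(a)_\lambda(b_\mu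 c)=(a_\lambda b)_{\lambda+\mu}\beta(c)$. It is regular if $\alpha,\beta$ are bijective. A BiHom-Lie conformal superalgebra $(R,[\cdot_\lambda\cdot],\alpha,\beta)$ is a $\mathbb{Z}_2$-graded $\mathbb{C}[\partial]$-module $R$ with two commuting linear maps $\alpha,\beta$ and a $\mathbb{C}$-linear map $R\otimes R\to R[\lambda]$, $a\otimes b\mapsto[a_\lambda b]$, with $[R_{i\,\lambda}R_j]\subseteq R_{i+j}[\lambda]$, such that for all homogeneous $a,b,c$: (1) $\alpha\partial=\partial\alpha$, $\beta\partial=\partial\beta$; (2) $\alpha([a_\lambda b])=[\alpha(a)_\lambda\alpha(b)]$, $\beta([a_\lambda b])=[\beta(a)_\lambda\beta(b)]$; (3) $[(\partial a)_\lambda b]=-\lambda[a_\lambda b]$, $[a_\lambda(\partial b)]=(\partial+\lambda)[a_\lambda b]$; (4) $[\beta(a)_\lambda\alpha(b)]=-(-1)^{|a||b|}[\beta(b)_{-\lambda-\partial}\alpha(a)]$; (5) $[\alpha\beta(a)_\lambda[b_\mu c]]=[[\beta(a)_\lambda b]_{\lambda+\mu}\beta(c)]+(-1)^{|a||b|}[\beta(b)_\mu[\alpha(a)_\lambda c]]$. *)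

theory Defs
  imports Complex_Main
begin

text \<open>R is a type 'r with a complex scalar multiplication scale
(a C-vector space), D is the action of the derivation, Rg 0 and Rg 1 are the
even and odd parts. An element of R[lambda] is represented by its (finitely
supported) coefficient sequence: f n is the coefficient of lambda^n.
An element of R[lambda,mu] is represented by g i j, the coefficient of
lambda^i mu^j. A lambda-product is thus mu :: 'r => 'r => nat => 'r with
a_lambda b = sum_n lambda^n (mu a b n).\<close>

definition clin :: "(complex \<Rightarrow> 'r::ab_group_add \<Rightarrow> 'r) \<Rightarrow> ('r \<Rightarrow> 'r) \<Rightarrow> bool" where
  "clin scale f \<longleftrightarrow> (\<forall>x y. f (x + y) = f x + f y) \<and> (\<forall>c x. f (scale c x) = scale c (f x))"

definition csubspace :: "(complex \<Rightarrow> 'r::ab_group_add \<Rightarrow> 'r) \<Rightarrow> 'r set \<Rightarrow> bool" where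
  "csubspace scale S \<longleftrightarrow> 0 \<in> S \<and> (\<forall>x\<in>S. \<forall>y\<in>S. x + y \<in> S) \<and> (\<forall>c. \<forall>x\<in>S. scale c x \<in> S)"

definition graded_CD_module ::
  "(complex \<Rightarrow> 'r::ab_group_add \<Rightarrow> 'r) \<Rightarrow> ('r \<Rightarrow> 'r) \<Rightarrow> (nat \<Rightarrow> 'r set) \<Rightarrow> bool" where
  "graded_CD_module scale D Rg \<longleftrightarrow>
     vector_space scale \<and> clin scale D \<and>
     csubspace scale (Rg 0) \<and> csubspace scale (Rg 1) \<and>
     Rg 0 \<inter> Rg 1 = {0} \<and> (\<forall>a. \<exists>x\<in>Rg 0. \<exists>y\<in>Rg 1. a = x + y) \<and>
     (\<forall>i<2. D ` Rg i \<subseteq> Rg i)"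

definition gcomp :: "(nat \<Rightarrow> 'r::ab_group_add set) \<Rightarrow> nat \<Rightarrow> 'r \<Rightarrow> 'r" where
  "gcomp Rg i a = (THE x. x \<in> Rg i \<and> a - x \<in> Rg (1 - i))"

text \<open>Multiplication by lambda on R[lambda].\<close>
definition shiftL :: "(nat \<Rightarrow> 'r::zero) \<Rightarrow> nat \<Rightarrow> 'r" where
  "shiftL f n = (if n = 0 then 0 else f (n - 1))"

text \<open>Substitution lambda := -lambda-partial: if f represents sum_n lambda^n c_n then
  sum_n (-lambda-partial)^n c_n has lambda^k-coefficient
  sum_{n>=k} (-1)^n (n choose k) partial^(n-k) c_n.\<close>
definition subst_neg ::
  "(complex \<Rightarrow> 'r::ab_group_add \<Rightarrow> 'r) \<Rightarrow> ('r \<Rightarrow> 'r) \<Rightarrow> (nat \<Rightarrow> 'r) \<Rightarrow> nat \<Rightarrow> 'r" where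
  "subst_neg scale D f k =
     (\<Sum>n\<in>{n. k \<le> n \<and> f n \<noteq> 0}. scale ((-1) ^ n * of_nat (n choose k)) ((D ^^ (n - k)) (f n)))"

text \<open>Given a lambda-product g, an element d of R[lambda] (d = sum_m lambda^m d_m) and z in R,
  the element d_(lambda+mu) z = sum_m lambda^m sum_n (lambda+mu)^n (g (d_m) z n) of R[lambda,mu];
  its lambda^i mu^j-coefficient is sum_{m<=i} ((i-m+j) choose j) g (d_m) z (i-m+j).\<close>
definition plus_subst ::
  "(complex \<Rightarrow> 'r::ab_group_add \<Rightarrow> 'r) \<Rightarrow> ('r \<Rightarrow> 'r \<Rightarrow> nat \<Rightarrow> 'r) \<Rightarrow> (nat \<Rightarrow> 'r) \<Rightarrow> 'r \<Rightarrow> nat \<Rightarrow> nat \<Rightarrow> 'r" where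
  "plus_subst scale g d z i j = (\<Sum>m\<le>i. scale (of_nat ((i - m + j) choose j)) (g (d m) z (i - m + j)))"

definition graded_lprod ::
  "(complex \<Rightarrow> 'r::ab_group_add \<Rightarrow> 'r) \<Rightarrow> (nat \<Rightarrow> 'r set) \<Rightarrow> ('r \<Rightarrow> 'r \<Rightarrow> nat \<Rightarrow> 'r) \<Rightarrow> bool" where
  "graded_lprod scale Rg m \<longleftrightarrow>
     (\<forall>a b. finite {n. m a b n \<noteq> 0}) \<and>
     (\<forall>b n. clin scale (\<lambda>a. m a b n)) \<and> (\<forall>a n. clin scale (\<lambda>b. m a b n)) \<and>
     (\<forall>i<2. \<forall>j<2. \<forall>a\<in>Rg i. \<forall>b\<in>Rg j. \<forall>n. m a b n \<in> Rg ((i + j) mod 2))"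

definition BiHom_assoc_conf_super ::
  "(complex \<Rightarrow> 'r::ab_group_add \<Rightarrow> 'r) \<Rightarrow> ('r \<Rightarrow> 'r) \<Rightarrow> (nat \<Rightarrow> 'r set) \<Rightarrow>
   ('r \<Rightarrow> 'r \<Rightarrow> nat \<Rightarrow> 'r) \<Rightarrow> ('r \<Rightarrow> 'r) \<Rightarrow> ('r \<Rightarrow> 'r) \<Rightarrow> bool" where
  "BiHom_assoc_conf_super scale D Rg m al be \<longleftrightarrow>
     graded_CD_module scale D Rg \<and> graded_lprod scale Rg m \<and>
     clin scale al \<and> clin scale be \<and> al \<circ> be = be \<circ> al \<and>
     (\<forall>i<2. al ` Rg i \<subseteq> Rg i \<and> be ` Rg i \<subseteq> Rg i) \<and>
     (\<forall>a b n. m (D a) b n = - shiftL (m a b) n) \<and>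
     (\<forall>a b n. m a (D b) n = D (m a b n) + shiftL (m a b) n) \<and>
     al \<circ> D = D \<circ> al \<and> be \<circ> D = D \<circ> be \<and>
     (\<forall>a b n. al (m a b n) = m (al a) (al b) n) \<and>
     (\<forall>a b n. be (m a b n) = m (be a) (be b) n) \<and>
     (\<forall>a b c i j. m (al a) (m b c j) i = plus_subst scale m (m a b) (be c) i j)"

definition regular_BiHom_assoc_conf_super where
  "regular_BiHom_assoc_conf_super scale D Rg m al be \<longleftrightarrow>
     BiHom_assoc_conf_super scale D Rg m al be \<and> bij al \<and> bij be"

definition BiHom_Lie_conf_super ::
  "(complex \<Rightarrow> 'r::ab_group_add \<Rightarrow> 'r) \<Rightarrow> ('r \<Rightarrow> 'r) \<Rightarrow> (nat \<Rightarrow> 'r set) \<Rightarrow>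
   ('r \<Rightarrow> 'r \<Rightarrow> nat \<Rightarrow> 'r) \<Rightarrow> ('r \<Rightarrow> 'r) \<Rightarrow> ('r \<Rightarrow> 'r) \<Rightarrow> bool" where
  "BiHom_Lie_conf_super scale D Rg br al be \<longleftrightarrow>
     graded_CD_module scale D Rg \<and> graded_lprod scale Rg br \<and>
     clin scale al \<and> clin scale be \<and> al \<circ> be = be \<circ> al \<and>
     al \<circ> D = D \<circ> al \<and> be \<circ> D = D \<circ> be \<and>
     (\<forall>a b n. al (br a b n) = br (al a) (al b) n) \<and>
     (\<forall>a b n. be (br a b n) = br (be a) (be b) n) \<and>
     (\<forall>a b n. br (D a) b n = - shiftL (br a b) n) \<and>
     (\<forall>a b n. br a (D b) n = D (br a b n) + shiftL (br a b) n) \<and>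
     (\<forall>i<2. \<forall>j<2. \<forall>a\<in>Rg i. \<forall>b\<in>Rg j. \<forall>n.
        br (be a) (al b) n = - scale ((-1) ^ (i * j)) (subst_neg scale D (br (be b) (al a)) n)) \<and>
     (\<forall>i<2. \<forall>j<2. \<forall>k<2. \<forall>a\<in>Rg i. \<forall>b\<in>Rg j. \<forall>c\<in>Rg k. \<forall>p q.
        br (al (be a)) (br b c q) p =
          plus_subst scale br (br (be a) b) (be c) p q
          + scale ((-1) ^ (i * j)) (br (be b) (br (al a) c p) q))"

text \<open>The bracket [a_lambda b] = a_lambda b - (-1)^(|a||b|) alpha^-1 beta(b)_(-lambda-partial) alpha beta^-1(a)
  on homogeneous elements, extended bilinearly via homogeneous components.\<close>
definition induced_bracket ::
  "(complex \<Rightarrow> 'r::ab_group_add \<Rightarrow> 'r) \<Rightarrow> ('r \<Rightarrow> 'r) \<Rightarrow> (nat \<Rightarrow> 'r set) \<Rightarrow>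
   ('r \<Rightarrow> 'r \<Rightarrow> nat \<Rightarrow> 'r) \<Rightarrow> ('r \<Rightarrow> 'r) \<Rightarrow> ('r \<Rightarrow> 'r) \<Rightarrow> 'r \<Rightarrow> 'r \<Rightarrow> nat \<Rightarrow> 'r" where
  "induced_bracket scale D Rg m al be a b n =
     m a b n - (\<Sum>i<2. \<Sum>j<2. scale ((-1) ^ (i * j))
        (subst_neg scale D (m (inv al (be (gcomp Rg j b))) (al (inv be (gcomp Rg i a)))) n))"

end

(*
  Write <x_\<lambda> y> = (\<alpha>\<inverse> x)_\<lambda> (\<beta>\<inverse> y). The BiHom-associativity
  \<alpha>(a)_\<lambda>(b_\<mu> c) = (a_\<lambda> b)_(\<lambda>+\<mu>) \<beta>(c) is exactly the ordinary associativity
  x_\<lambda>(y_\<mu> z) = (x_\<lambda> y)_(\<lambda>+\<mu>) z of this untwisted product, and the bracket of the theorem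
  is [a_\<lambda> b] = {\<alpha>(a)_\<lambda> \<beta>(b)}, where {u_\<lambda> v} = <u_\<lambda> v> - (-1)^(|u||v|) <v_(-\<lambda>-\<partial>) u>
  is the super-commutator of the untwisted product. Skew-symmetry and the Jacobi identity are
  therefore the classical facts about super-commutators in an associative conformal algebra,
  with the Koszul signs carried along as scalars s satisfying s * s = 1.

  The classical facts come down to re-associating products one of whose factors is evaluated
  at -\<lambda>-\<partial>. Each such rule is an identity in R[\<lambda>,\<mu>] between x_\<lambda>(y_\<mu> z) and images of it
  under substitutions \<lambda> := p\<lambda> + q\<mu> + r\<partial>, \<mu> := p'\<lambda> + q'\<mu> + r'\<partial>. These substitutions compose
  like the underlying linear forms and are determined by how they treat constants and
  multiplication by \<lambda> and \<mu>, so every such identity reduces to a computation with linear forms.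
*)

theory Submission
  imports Defs "HOL-Library.Function_Algebras"
begin

section \<open>Coefficient sequences with finite support\<close>

definition finite_coeffs :: "(nat \<Rightarrow> 'a::zero) \<Rightarrow> bool" where
  "finite_coeffs f \<longleftrightarrow> finite {n. f n \<noteq> 0}"

definition finite_coeffs2 :: "(nat \<Rightarrow> nat \<Rightarrow> 'a::zero) \<Rightarrow> bool" where
  "finite_coeffs2 h \<longleftrightarrow> finite {(a, b). h a b \<noteq> 0}"

definition const1 :: "'a::zero \<Rightarrow> nat \<Rightarrow> 'a" where
  "const1 c n = (if n = 0 then c else 0)"

definition const2 :: "'a::zero \<Rightarrow> nat \<Rightarrow> nat \<Rightarrow> 'a" where
  "const2 c a b = (if a = 0 \<and> b = 0 then c else 0)"

definition shiftL2 :: "(nat \<Rightarrow> nat \<Rightarrow> 'a::zero) \<Rightarrow> nat \<Rightarrow> nat \<Rightarrow> 'a" where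
  "shiftL2 h a b = (if a = 0 then 0 else h (a - 1) b)"

definition shiftM2 :: "(nat \<Rightarrow> nat \<Rightarrow> 'a::zero) \<Rightarrow> nat \<Rightarrow> nat \<Rightarrow> 'a" where
  "shiftM2 h a b = (if b = 0 then 0 else h a (b - 1))"

definition lift2 :: "(nat \<Rightarrow> 'a::zero) \<Rightarrow> nat \<Rightarrow> nat \<Rightarrow> 'a" where
  "lift2 f a b = (if b = 0 then f a else 0)"

definition swap2 :: "(nat \<Rightarrow> nat \<Rightarrow> 'a) \<Rightarrow> nat \<Rightarrow> nat \<Rightarrow> 'a" where
  "swap2 h a b = h b a"

lemma sum_fun_apply: "sum f A x = (\<Sum>i\<in>A. f i x)"
  by (induct A rule: infinite_finite_induct) auto

lemma const1_0 [simp]: "const1 0 = 0"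
  by (auto simp: const1_def fun_eq_iff)

lemma const2_0 [simp]: "const2 0 = 0"
  by (auto simp: const2_def fun_eq_iff)

lemma const2_add: "const2 (x + y) = const2 x + const2 (y::'a::monoid_add)"
  by (auto simp: const2_def fun_eq_iff)

lemma lift2_inject: "lift2 f = lift2 g \<Longrightarrow> f = g"
  by (simp add: lift2_def fun_eq_iff) (metis)

lemma lift2_add: "lift2 (f + g) = lift2 f + lift2 (g::nat \<Rightarrow> 'a::monoid_add)"
  by (auto simp: lift2_def fun_eq_iff)

lemma lift2_const1: "lift2 (const1 c) = const2 c"
  by (auto simp: lift2_def const1_def const2_def fun_eq_iff)

lemma lift2_shiftL: "lift2 (shiftL f) = shiftL2 (lift2 f)"
  by (auto simp: lift2_def shiftL2_def shiftL_def fun_eq_iff)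

lemma swap2_add: "swap2 (f + g) = swap2 f + swap2 g"
  by (simp add: swap2_def fun_eq_iff)

lemma swap2_const2: "swap2 (const2 c) = const2 c"
  by (auto simp: swap2_def const2_def fun_eq_iff)

lemma swap2_shiftL2: "swap2 (shiftL2 f) = shiftM2 (swap2 f)"
  by (simp add: swap2_def shiftL2_def shiftM2_def fun_eq_iff)

lemma swap2_shiftM2: "swap2 (shiftM2 f) = shiftL2 (swap2 f)"
  by (simp add: swap2_def shiftL2_def shiftM2_def fun_eq_iff)

lemma finite_coeffs_mono:
  "finite_coeffs f \<Longrightarrow> (\<And>n. f n = 0 \<Longrightarrow> g n = 0) \<Longrightarrow> finite_coeffs g"
  unfolding finite_coeffs_def by (erule finite_subset[rotated]) blast

lemma finite_coeffs_bound:
  assumes "finite_coeffs f"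
  obtains N where "\<forall>n. f n \<noteq> 0 \<longrightarrow> n < N"
  using assms unfolding finite_coeffs_def finite_nat_set_iff_bounded by blast

lemma finite_coeffs_bound_add:
  fixes f g :: "nat \<Rightarrow> 'a::monoid_add"
  assumes "finite_coeffs f" and "finite_coeffs g"
  obtains N where "\<forall>n. f n \<noteq> 0 \<longrightarrow> n < N" and "\<forall>n. g n \<noteq> 0 \<longrightarrow> n < N"
    and "\<forall>n. (f + g) n \<noteq> 0 \<longrightarrow> n < N"
proof -
  obtain N1 where N1: "\<forall>n. f n \<noteq> 0 \<longrightarrow> n < N1" using finite_coeffs_bound[OF assms(1)] by blast
  obtain N2 where N2: "\<forall>n. g n \<noteq> 0 \<longrightarrow> n < N2" using finite_coeffs_bound[OF assms(2)] by blast
  show thesis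
  proof (rule that[of "max N1 N2"])
    show "\<forall>n. f n \<noteq> 0 \<longrightarrow> n < max N1 N2" "\<forall>n. g n \<noteq> 0 \<longrightarrow> n < max N1 N2"
      using N1 N2 by (simp_all add: less_max_iff_disj)
    show "\<forall>n. (f + g) n \<noteq> 0 \<longrightarrow> n < max N1 N2"
    proof (intro allI impI)
      fix n assume "(f + g) n \<noteq> 0"
      then have "f n \<noteq> 0 \<or> g n \<noteq> 0" by auto
      then show "n < max N1 N2" using N1 N2 by (auto simp: less_max_iff_disj)
    qed
  qed
qed

lemma finite_coeffs_add:
  "finite_coeffs f \<Longrightarrow> finite_coeffs g \<Longrightarrow> finite_coeffs (f + (g::nat \<Rightarrow> 'a::monoid_add))"
  unfolding finite_coeffs_def by (rule finite_subset[of _ "{n. f n \<noteq> 0} \<union> {n. g n \<noteq> 0}"]) auto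

lemma finite_coeffs_diff:
  "finite_coeffs f \<Longrightarrow> finite_coeffs g \<Longrightarrow> finite_coeffs (f - (g::nat \<Rightarrow> 'a::group_add))"
  unfolding finite_coeffs_def by (rule finite_subset[of _ "{n. f n \<noteq> 0} \<union> {n. g n \<noteq> 0}"]) auto

lemma finite_coeffs_0 [simp]: "finite_coeffs 0"
  by (simp add: finite_coeffs_def)

lemma finite_coeffs_sum:
  "(\<And>i. i \<in> A \<Longrightarrow> finite_coeffs (f i)) \<Longrightarrow> finite_coeffs (sum f A)"
  by (induct A rule: infinite_finite_induct) (auto simp: finite_coeffs_add)

lemma finite_coeffs_const1 [simp]: "finite_coeffs (const1 c)"
  unfolding finite_coeffs_def const1_def by (rule finite_subset[of _ "{0}"]) auto

lemma finite_coeffs_shiftL: "finite_coeffs f \<Longrightarrow> finite_coeffs (shiftL f)"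
  unfolding finite_coeffs_def shiftL_def
  by (rule finite_subset[of _ "Suc ` {n. f n \<noteq> 0}"]) (auto simp: image_iff gr0_conv_Suc)

lemma finite_coeffs2_bound:
  assumes "finite_coeffs2 h"
  obtains N where "\<forall>a b. h a b \<noteq> 0 \<longrightarrow> a < N \<and> b < N"
proof -
  let ?S = "{(a, b). h a b \<noteq> 0}"
  have "finite (fst ` ?S \<union> snd ` ?S)" using assms by (simp add: finite_coeffs2_def)
  then obtain N where N: "\<forall>n \<in> fst ` ?S \<union> snd ` ?S. n < N"
    unfolding finite_nat_set_iff_bounded by blast
  show thesis
  proof (rule that, intro allI impI)
    fix a b assume "h a b \<noteq> 0"
    then have "a \<in> fst ` ?S" "b \<in> snd ` ?S" by force+
    then show "a < N \<and> b < N" using N by blast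
  qed
qed

lemma finite_coeffs2_bound_add:
  fixes f g :: "nat \<Rightarrow> nat \<Rightarrow> 'a::monoid_add"
  assumes "finite_coeffs2 f" and "finite_coeffs2 g"
  obtains N where "\<forall>a b. f a b \<noteq> 0 \<longrightarrow> a < N \<and> b < N" and "\<forall>a b. g a b \<noteq> 0 \<longrightarrow> a < N \<and> b < N"
    and "\<forall>a b. (f + g) a b \<noteq> 0 \<longrightarrow> a < N \<and> b < N"
proof -
  obtain N1 where N1: "\<forall>a b. f a b \<noteq> 0 \<longrightarrow> a < N1 \<and> b < N1"
    using finite_coeffs2_bound[OF assms(1)] by blast
  obtain N2 where N2: "\<forall>a b. g a b \<noteq> 0 \<longrightarrow> a < N2 \<and> b < N2"
    using finite_coeffs2_bound[OF assms(2)] by blast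
  show thesis
  proof (rule that[of "max N1 N2"])
    show "\<forall>a b. f a b \<noteq> 0 \<longrightarrow> a < max N1 N2 \<and> b < max N1 N2"
      "\<forall>a b. g a b \<noteq> 0 \<longrightarrow> a < max N1 N2 \<and> b < max N1 N2"
      using N1 N2 by (simp_all add: less_max_iff_disj)
    show "\<forall>a b. (f + g) a b \<noteq> 0 \<longrightarrow> a < max N1 N2 \<and> b < max N1 N2"
    proof (intro allI impI)
      fix a b assume "(f + g) a b \<noteq> 0"
      then have "f a b \<noteq> 0 \<or> g a b \<noteq> 0" by auto
      then show "a < max N1 N2 \<and> b < max N1 N2" using N1 N2 by (auto simp: less_max_iff_disj)
    qed
  qed
qed

lemma finite_coeffs2_mono:
  "finite_coeffs2 f \<Longrightarrow> (\<And>a b. f a b = 0 \<Longrightarrow> g a b = 0) \<Longrightarrow> finite_coeffs2 g"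
  unfolding finite_coeffs2_def by (erule finite_subset[rotated]) blast

lemma finite_coeffs2_0 [simp]: "finite_coeffs2 0"
  by (simp add: finite_coeffs2_def)

lemma finite_coeffs2_add:
  "finite_coeffs2 f \<Longrightarrow> finite_coeffs2 g \<Longrightarrow> finite_coeffs2 (f + (g::nat \<Rightarrow> nat \<Rightarrow> 'a::monoid_add))"
  unfolding finite_coeffs2_def
  by (rule finite_subset[of _ "{(a, b). f a b \<noteq> 0} \<union> {(a, b). g a b \<noteq> 0}"]) auto

lemma finite_coeffs2_sum:
  "(\<And>i. i \<in> A \<Longrightarrow> finite_coeffs2 (f i)) \<Longrightarrow> finite_coeffs2 (sum f A)"
  by (induct A rule: infinite_finite_induct) (auto intro: finite_coeffs2_add)

lemma finite_coeffs2_const2 [simp]: "finite_coeffs2 (const2 c)"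
  unfolding finite_coeffs2_def const2_def by (rule finite_subset[of _ "{(0, 0)}"]) auto

lemma finite_coeffs2_shiftL2: "finite_coeffs2 h \<Longrightarrow> finite_coeffs2 (shiftL2 h)"
  unfolding finite_coeffs2_def shiftL2_def
  by (rule finite_subset[of _ "(\<lambda>(a, b). (Suc a, b)) ` {(a, b). h a b \<noteq> 0}"])
     (auto simp: image_iff gr0_conv_Suc)

lemma finite_coeffs2_shiftM2: "finite_coeffs2 h \<Longrightarrow> finite_coeffs2 (shiftM2 h)"
  unfolding finite_coeffs2_def shiftM2_def
  by (rule finite_subset[of _ "(\<lambda>(a, b). (a, Suc b)) ` {(a, b). h a b \<noteq> 0}"])
     (auto simp: image_iff gr0_conv_Suc)

lemma finite_coeffs2_lift2: "finite_coeffs f \<Longrightarrow> finite_coeffs2 (lift2 f)"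
  unfolding finite_coeffs_def finite_coeffs2_def lift2_def
  by (rule finite_subset[of _ "(\<lambda>a. (a, 0)) ` {n. f n \<noteq> 0}"]) auto

lemma finite_coeffs2_swap2: "finite_coeffs2 h \<Longrightarrow> finite_coeffs2 (swap2 h)"
  unfolding finite_coeffs2_def swap2_def
  by (rule finite_subset[of _ "prod.swap ` {(a, b). h a b \<noteq> 0}"]) auto

lemma finite_coeffs_column: "finite_coeffs2 H \<Longrightarrow> finite_coeffs (\<lambda>a. H a q)"
  unfolding finite_coeffs_def finite_coeffs2_def
  by (rule finite_subset[of _ "fst ` {(a, b). H a b \<noteq> 0}"]) force+

lemma finite_coeffs2_columns:
  assumes "finite_coeffs w" and "\<And>u. finite_coeffs (G u)" and "G 0 = 0"
  shows "finite_coeffs2 (\<lambda>a b. G (w b) a)"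
  unfolding finite_coeffs2_def
proof (rule finite_subset)
  show "{(a, b). G (w b) a \<noteq> 0} \<subseteq> (\<Union>b \<in> {n. w n \<noteq> 0}. {a. G (w b) a \<noteq> 0} \<times> {b})"
    using assms(3) by auto
  show "finite (\<Union>b \<in> {n. w n \<noteq> 0}. {a. G (w b) a \<noteq> 0} \<times> {b})"
    using assms(1,2) by (auto simp: finite_coeffs_def)
qed

lemma finite_coeffs_induct [consumes 1, case_names const add shiftL]:
  fixes f :: "nat \<Rightarrow> 'a::monoid_add"
  assumes "finite_coeffs f"
    and const: "\<And>c. P (const1 c)"
    and add: "\<And>f g. finite_coeffs f \<Longrightarrow> finite_coeffs g \<Longrightarrow> P f \<Longrightarrow> P g \<Longrightarrow> P (f + g)"
    and shiftL: "\<And>f. finite_coeffs f \<Longrightarrow> P f \<Longrightarrow> P (shiftL f)"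
  shows "P f"
proof -
  have bounded: "P f" if "\<And>n. f n \<noteq> 0 \<Longrightarrow> n < N" for N f
    using that
  proof (induction N arbitrary: f)
    case 0
    then have "f = const1 0" by (simp add: fun_eq_iff) blast
    then show ?case using const by metis
  next
    case (Suc N)
    define g where "g n = f (Suc n)" for n
    have bound: "g n \<noteq> 0 \<Longrightarrow> n < N" for n using Suc.prems[of "Suc n"] by (simp add: g_def)
    have "finite_coeffs g"
      unfolding finite_coeffs_def by (rule finite_subset[of _ "{..<N}"]) (auto dest: bound)
    moreover have "P g" by (rule Suc.IH) (rule bound)
    ultimately have "P (const1 (f 0) + shiftL g)" by (simp add: add const shiftL finite_coeffs_shiftL)
    moreover have "f = const1 (f 0) + shiftL g"
      by (simp add: fun_eq_iff const1_def shiftL_def g_def)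
    ultimately show ?case by metis
  qed
  obtain N where "\<forall>n. f n \<noteq> 0 \<longrightarrow> n < N" using finite_coeffs_bound[OF assms(1)] by blast
  then show ?thesis using bounded by blast
qed

lemma finite_coeffs2_induct [consumes 1, case_names const add shiftL2 shiftM2]:
  fixes h :: "nat \<Rightarrow> nat \<Rightarrow> 'a::monoid_add"
  assumes "finite_coeffs2 h"
    and const: "\<And>c. P (const2 c)"
    and add: "\<And>f g. finite_coeffs2 f \<Longrightarrow> finite_coeffs2 g \<Longrightarrow> P f \<Longrightarrow> P g \<Longrightarrow> P (f + g)"
    and shiftL2: "\<And>f. finite_coeffs2 f \<Longrightarrow> P f \<Longrightarrow> P (shiftL2 f)"
    and shiftM2: "\<And>f. finite_coeffs2 f \<Longrightarrow> P f \<Longrightarrow> P (shiftM2 f)"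
  shows "P h"
proof -
  have bounded: "P h" if "\<And>a b. h a b \<noteq> 0 \<Longrightarrow> a + b < N" for N h
    using that
  proof (induction N arbitrary: h)
    case 0
    then have "h = const2 0" by (simp add: fun_eq_iff) blast
    then show ?case using const by metis
  next
    case (Suc N)
    define g1 where "g1 a b = (if a = 0 then h 0 (Suc b) else 0)" for a b :: nat
    define g2 where "g2 a b = h (Suc a) b" for a b :: nat
    have bound1: "g1 a b \<noteq> 0 \<Longrightarrow> a + b < N" for a b
      using Suc.prems[of 0 "Suc b"] by (simp add: g1_def split: if_splits)
    have bound2: "g2 a b \<noteq> 0 \<Longrightarrow> a + b < N" for a b
      using Suc.prems[of "Suc a" b] by (simp add: g2_def)
    have "finite_coeffs2 g1" "finite_coeffs2 g2"
      unfolding finite_coeffs2_def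
      by (rule finite_subset[of _ "{..<N} \<times> {..<N}"], use bound1 bound2 in fastforce, simp)+
    moreover have "P g1" "P g2" by (rule Suc.IH, erule bound1, rule Suc.IH, erule bound2)
    ultimately have "P (const2 (h 0 0) + (shiftM2 g1 + shiftL2 g2))"
      by (simp add: add const shiftL2 shiftM2 finite_coeffs2_add finite_coeffs2_shiftL2
          finite_coeffs2_shiftM2)
    moreover have "h = const2 (h 0 0) + (shiftM2 g1 + shiftL2 g2)"
      by (simp add: fun_eq_iff const2_def shiftM2_def shiftL2_def g1_def g2_def)
    ultimately show ?case by metis
  qed
  obtain N where "\<forall>a b. h a b \<noteq> 0 \<longrightarrow> a < N \<and> b < N"
    using finite_coeffs2_bound[OF assms(1)] by blast
  then have "\<And>a b. h a b \<noteq> 0 \<Longrightarrow> a + b < N + N" by fastforce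
  then show ?thesis by (rule bounded)
qed

section \<open>Linear substitutions in two variables\<close>

text \<open>A triple (p, q, r) stands for the linear form p\<lambda> + q\<mu> + r\<partial>; form_subst w u v is w after
  the substitution \<lambda> := u, \<mu> := v.\<close>
type_synonym form = "complex \<times> complex \<times> complex"

fun form_subst :: "form \<Rightarrow> form \<Rightarrow> form \<Rightarrow> form" where
  "form_subst (p, q, r) (p1, q1, r1) (p2, q2, r2) =
     (p * p1 + q * p2, p * q1 + q * q2, p * r1 + q * r2 + r)"

definition map_coeffs2 :: "('a \<Rightarrow> 'b) \<Rightarrow> (nat \<Rightarrow> nat \<Rightarrow> 'a) \<Rightarrow> nat \<Rightarrow> nat \<Rightarrow> 'b" where
  "map_coeffs2 \<phi> h a b = \<phi> (h a b)"

lemma finite_coeffs2_map_coeffs2: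
  "finite_coeffs2 h \<Longrightarrow> \<phi> 0 = 0 \<Longrightarrow> finite_coeffs2 (map_coeffs2 \<phi> h)"
  by (auto simp: map_coeffs2_def elim: finite_coeffs2_mono)

locale cderiv_module = module scale + D: module_hom scale scale D
  for scale :: "complex \<Rightarrow> 'r::ab_group_add \<Rightarrow> 'r" and D :: "'r \<Rightarrow> 'r"
begin

lemma module_hom_funpow_D: "module_hom scale scale (D ^^ n)"
  by (induct n)
     (simp_all add: module_hom_ident module_hom_compose[OF _ D.module_hom_axioms, unfolded comp_def])

lemma funpow_D_0 [simp]: "(D ^^ n) 0 = 0"
  by (induct n) simp_all

definition mult_form :: "form \<Rightarrow> (nat \<Rightarrow> nat \<Rightarrow> 'r) \<Rightarrow> nat \<Rightarrow> nat \<Rightarrow> 'r" where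
  "mult_form u h a b = (case u of (p, q, r) \<Rightarrow>
     scale p (shiftL2 h a b) + scale q (shiftM2 h a b) + scale r (D (h a b)))"

text \<open>subst2 u v h is h(u, v): the monomial \<lambda>^a \<mu>^b c becomes u^a v^b c, with \<partial> acting on c.\<close>
definition subst2 :: "form \<Rightarrow> form \<Rightarrow> (nat \<Rightarrow> nat \<Rightarrow> 'r) \<Rightarrow> nat \<Rightarrow> nat \<Rightarrow> 'r" where
  "subst2 u v h =
     (\<Sum>(a, b) \<in> {(a, b). h a b \<noteq> 0}. (mult_form u ^^ a) ((mult_form v ^^ b) (const2 (h a b))))"

lemma mult_form_apply [simp]:
  "mult_form (p, q, r) h a b = scale p (shiftL2 h a b) + scale q (shiftM2 h a b) + scale r (D (h a b))"
  by (simp add: mult_form_def)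

lemma mult_form_shiftL2: "mult_form (1, 0, 0) h = shiftL2 h"
  by (simp add: fun_eq_iff)

lemma mult_form_shiftM2: "mult_form (0, 1, 0) h = shiftM2 h"
  by (simp add: fun_eq_iff)

lemma mult_form_add: "mult_form u (h1 + h2) = mult_form u h1 + mult_form u h2"
  by (cases u) (simp add: fun_eq_iff shiftL2_def shiftM2_def D.add scale_right_distrib)

lemma mult_form_0 [simp]: "mult_form u 0 = 0"
  by (cases u) (simp add: fun_eq_iff shiftL2_def shiftM2_def)

lemma funpow_mult_form_add:
  "(mult_form u ^^ n) (h1 + h2) = (mult_form u ^^ n) h1 + (mult_form u ^^ n) h2"
  by (induct n) (simp_all only: funpow.simps comp_apply id_apply mult_form_add)

lemma funpow_mult_form_0 [simp]: "(mult_form u ^^ n) 0 = 0"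
  by (induct n) (simp_all only: funpow.simps comp_apply id_apply mult_form_0)

lemma funpow_mult_form_sum:
  "(mult_form u ^^ n) (sum f A) = (\<Sum>i\<in>A. (mult_form u ^^ n) (f i))"
proof (induct A rule: infinite_finite_induct)
  case (insert x F)
  then show ?case by (metis (no_types) sum.insert funpow_mult_form_add)
qed (metis sum.infinite sum.empty funpow_mult_form_0)+

lemma mult_form_sum: "mult_form u (sum f A) = (\<Sum>i\<in>A. mult_form u (f i))"
  using funpow_mult_form_sum[where n = 1] by simp

lemma mult_form_commute: "mult_form u (mult_form v h) = mult_form v (mult_form u h)"
proof -
  obtain p q r p' q' r' where uv: "u = (p, q, r)" "v = (p', q', r')" by (cases u, cases v)
  have "mult_form u (mult_form v h) a b = mult_form v (mult_form u h) a b" for a b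
    unfolding uv
    by (cases a; cases b) (simp_all add: shiftL2_def shiftM2_def D.add D.scale
        scale_right_distrib mult.commute add_ac)
  then show ?thesis by (simp add: fun_eq_iff)
qed

lemma funpow_mult_form_commute:
  "mult_form u ((mult_form v ^^ n) h) = (mult_form v ^^ n) (mult_form u h)"
  by (induct n) (simp_all only: funpow.simps comp_apply id_apply mult_form_commute[of u v])

lemma finite_coeffs2_mult_form: "finite_coeffs2 h \<Longrightarrow> finite_coeffs2 (mult_form u h)"
proof -
  assume h: "finite_coeffs2 h"
  obtain p q r where u: "u = (p, q, r)" by (cases u)
  have "mult_form u h = map_coeffs2 (scale p) (shiftL2 h) + map_coeffs2 (scale q) (shiftM2 h)
      + map_coeffs2 (scale r) (map_coeffs2 D h)"
    by (simp add: u map_coeffs2_def fun_eq_iff)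
  then show ?thesis
    using h by (simp add: finite_coeffs2_map_coeffs2 finite_coeffs2_add finite_coeffs2_shiftL2
        finite_coeffs2_shiftM2)
qed

lemma finite_coeffs2_funpow_mult_form: "finite_coeffs2 h \<Longrightarrow> finite_coeffs2 ((mult_form u ^^ n) h)"
  by (induct n) (simp_all add: finite_coeffs2_mult_form)

lemma map_coeffs2_sum:
  "module_hom scale scale \<phi> \<Longrightarrow> map_coeffs2 \<phi> (sum f A) = (\<Sum>i\<in>A. map_coeffs2 \<phi> (f i))"
  by (simp add: map_coeffs2_def fun_eq_iff module_hom.sum sum_fun_apply)

lemma map_coeffs2_const2: "\<phi> 0 = 0 \<Longrightarrow> map_coeffs2 \<phi> (const2 c) = const2 (\<phi> c)"
  by (simp add: map_coeffs2_def const2_def fun_eq_iff)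

lemma mult_form_map_coeffs2:
  assumes "module_hom scale scale \<phi>" and "\<And>x. \<phi> (D x) = D (\<phi> x)"
  shows "mult_form u (map_coeffs2 \<phi> h) = map_coeffs2 \<phi> (mult_form u h)"
  by (cases u) (simp add: fun_eq_iff map_coeffs2_def shiftL2_def shiftM2_def assms(2)
      module_hom.add[OF assms(1)] module_hom.scale[OF assms(1)] module_hom.zero[OF assms(1)])

lemma funpow_mult_form_map_coeffs2:
  assumes "module_hom scale scale \<phi>" and "\<And>x. \<phi> (D x) = D (\<phi> x)"
  shows "(mult_form u ^^ n) (map_coeffs2 \<phi> h) = map_coeffs2 \<phi> ((mult_form u ^^ n) h)"
  by (induct n) (simp_all add: mult_form_map_coeffs2[OF assms])

lemma mult_form_split:
  "mult_form (p, q, r) h = map_coeffs2 (scale p) (shiftL2 h) + map_coeffs2 (scale q) (shiftM2 h)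
     + map_coeffs2 (scale r) (map_coeffs2 D h)"
  by (simp add: fun_eq_iff map_coeffs2_def)

lemma subst2_eq_box_sum:
  assumes "\<forall>a b. h a b \<noteq> 0 \<longrightarrow> a < Na \<and> b < Nb"
  shows "subst2 u v h = (\<Sum>a<Na. \<Sum>b<Nb. (mult_form u ^^ a) ((mult_form v ^^ b) (const2 (h a b))))"
proof -
  let ?T = "\<lambda>a b. (mult_form u ^^ a) ((mult_form v ^^ b) (const2 (h a b)))"
  have "(\<Sum>a<Na. \<Sum>b<Nb. ?T a b) = (\<Sum>(a, b) \<in> {..<Na} \<times> {..<Nb}. ?T a b)"
    by (rule sum.cartesian_product)
  also have "\<dots> = (\<Sum>(a, b) \<in> {(a, b). h a b \<noteq> 0}. ?T a b)"
    by (rule sum.mono_neutral_right) (use assms in auto)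
  finally show ?thesis by (simp add: subst2_def)
qed

lemma subst2_add:
  assumes "finite_coeffs2 h1" and "finite_coeffs2 h2"
  shows "subst2 u v (h1 + h2) = subst2 u v h1 + subst2 u v h2"
proof -
  obtain N where B1: "\<forall>a b. h1 a b \<noteq> 0 \<longrightarrow> a < N \<and> b < N"
    and B2: "\<forall>a b. h2 a b \<noteq> 0 \<longrightarrow> a < N \<and> b < N" and B: "\<forall>a b. (h1 + h2) a b \<noteq> 0 \<longrightarrow> a < N \<and> b < N"
    using finite_coeffs2_bound_add[OF assms] by blast
  let ?T = "\<lambda>h a b. (mult_form u ^^ a) ((mult_form v ^^ b) (const2 (h a b)))"
  have "subst2 u v (h1 + h2) = (\<Sum>a<N. \<Sum>b<N. ?T (h1 + h2) a b)"
    by (rule subst2_eq_box_sum[OF B])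
  also have "\<dots> = (\<Sum>a<N. \<Sum>b<N. ?T h1 a b) + (\<Sum>a<N. \<Sum>b<N. ?T h2 a b)"
    by (simp add: const2_add funpow_mult_form_add sum.distrib)
  also have "\<dots> = subst2 u v h1 + subst2 u v h2"
    by (simp only: subst2_eq_box_sum[OF B1] subst2_eq_box_sum[OF B2])
  finally show ?thesis .
qed

lemma subst2_const2 [simp]: "subst2 u v (const2 c) = const2 c"
  by (subst subst2_eq_box_sum[where Na = 1 and Nb = 1]) (auto simp: const2_def split: if_splits)

lemma subst2_map_coeffs2:
  assumes "module_hom scale scale \<phi>" and "\<And>x. \<phi> (D x) = D (\<phi> x)" and "finite_coeffs2 h"
  shows "subst2 u v (map_coeffs2 \<phi> h) = map_coeffs2 \<phi> (subst2 u v h)"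
proof -
  have \<phi>0: "\<phi> 0 = 0" using module_hom.zero[OF assms(1)] .
  obtain N where N: "\<forall>a b. h a b \<noteq> 0 \<longrightarrow> a < N \<and> b < N"
    using finite_coeffs2_bound[OF assms(3)] by blast
  have B: "\<forall>a b. map_coeffs2 \<phi> h a b \<noteq> 0 \<longrightarrow> a < N \<and> b < N"
    using N \<phi>0 by (metis map_coeffs2_def)
  let ?T = "\<lambda>h a b. (mult_form u ^^ a) ((mult_form v ^^ b) (const2 (h a b)))"
  have "subst2 u v (map_coeffs2 \<phi> h) = (\<Sum>a<N. \<Sum>b<N. ?T (map_coeffs2 \<phi> h) a b)"
    by (rule subst2_eq_box_sum[OF B])
  also have "\<dots> = map_coeffs2 \<phi> (\<Sum>a<N. \<Sum>b<N. ?T h a b)"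
    by (simp add: map_coeffs2_sum[OF assms(1)] map_coeffs2_def[of \<phi> h]
        map_coeffs2_const2[where \<phi> = \<phi>, OF \<phi>0, symmetric] funpow_mult_form_map_coeffs2[OF assms(1,2)])
  also have "\<dots> = map_coeffs2 \<phi> (subst2 u v h)"
    by (simp only: subst2_eq_box_sum[OF N])
  finally show ?thesis .
qed

lemma subst2_shiftL2:
  assumes "finite_coeffs2 h"
  shows "subst2 u v (shiftL2 h) = mult_form u (subst2 u v h)"
proof -
  obtain N where N: "\<forall>a b. h a b \<noteq> 0 \<longrightarrow> a < N \<and> b < N"
    using finite_coeffs2_bound[OF assms] by blast
  then have B: "\<forall>a b. shiftL2 h a b \<noteq> 0 \<longrightarrow> a < Suc N \<and> b < N"
    by (auto simp: shiftL2_def split: if_splits) (metis Suc_pred not_less_eq)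
  have "subst2 u v (shiftL2 h)
      = (\<Sum>a<Suc N. \<Sum>b<N. (mult_form u ^^ a) ((mult_form v ^^ b) (const2 (shiftL2 h a b))))"
    by (rule subst2_eq_box_sum[OF B])
  also have "\<dots> = mult_form u (subst2 u v h)"
    by (simp only: sum.lessThan_Suc_shift subst2_eq_box_sum[OF N]) (simp add: shiftL2_def mult_form_sum)
  finally show ?thesis .
qed

lemma subst2_shiftM2:
  assumes "finite_coeffs2 h"
  shows "subst2 u v (shiftM2 h) = mult_form v (subst2 u v h)"
proof -
  obtain N where N: "\<forall>a b. h a b \<noteq> 0 \<longrightarrow> a < N \<and> b < N"
    using finite_coeffs2_bound[OF assms] by blast
  then have B: "\<forall>a b. shiftM2 h a b \<noteq> 0 \<longrightarrow> a < N \<and> b < Suc N"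
    by (auto simp: shiftM2_def split: if_splits) (metis Suc_pred not_less_eq)
  have "subst2 u v (shiftM2 h)
      = (\<Sum>a<N. \<Sum>b<Suc N. (mult_form u ^^ a) ((mult_form v ^^ b) (const2 (shiftM2 h a b))))"
    by (rule subst2_eq_box_sum[OF B])
  also have "\<dots> = mult_form v (subst2 u v h)"
    by (simp only: sum.lessThan_Suc_shift subst2_eq_box_sum[OF N])
       (simp add: shiftM2_def mult_form_sum funpow_mult_form_commute)
  finally show ?thesis .
qed

lemma finite_coeffs2_subst2: "finite_coeffs2 (subst2 u v h)"
  unfolding subst2_def
  by (rule finite_coeffs2_sum) (auto simp: finite_coeffs2_funpow_mult_form)

lemma subst2_mult_form:
  assumes "finite_coeffs2 h"
  shows "subst2 u v (mult_form w h) = mult_form (form_subst w u v) (subst2 u v h)"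
proof -
  obtain p q r where w: "w = (p, q, r)" by (cases w)
  let ?K = "subst2 u v h"
  have "subst2 u v (mult_form w h) = map_coeffs2 (scale p) (mult_form u ?K)
      + map_coeffs2 (scale q) (mult_form v ?K) + map_coeffs2 (scale r) (map_coeffs2 D ?K)"
    using assms
    by (simp add: w mult_form_split subst2_add subst2_map_coeffs2 subst2_shiftL2 subst2_shiftM2
        finite_coeffs2_add finite_coeffs2_map_coeffs2 finite_coeffs2_shiftL2 finite_coeffs2_shiftM2
        D.module_hom_axioms D.scale)
  also have "\<dots> = mult_form (form_subst w u v) ?K"
    by (cases u, cases v)
       (simp add: w fun_eq_iff map_coeffs2_def shiftL2_def shiftM2_def scale_left_distrib
        scale_right_distrib D.add D.scale add_ac)
  finally show ?thesis .
qed

text \<open>In the inductions below plus_fun_apply is removed from the simpset: with it, simp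
  eta-expands f + g while using the induction hypotheses, and the additivity lemmas no longer apply.\<close>
lemma subst2_subst2:
  "finite_coeffs2 h \<Longrightarrow> subst2 u v (subst2 u' v' h) = subst2 (form_subst u' u v) (form_subst v' u v) h"
  by (erule finite_coeffs2_induct)
     (simp_all del: plus_fun_apply
      add: subst2_add subst2_shiftL2 subst2_shiftM2 subst2_mult_form finite_coeffs2_subst2)

lemma subst2_id: "finite_coeffs2 h \<Longrightarrow> subst2 (1, 0, 0) (0, 1, 0) h = h"
  by (erule finite_coeffs2_induct)
     (simp_all del: plus_fun_apply
      add: subst2_add subst2_shiftL2 subst2_shiftM2 mult_form_shiftL2 mult_form_shiftM2)

lemma swap2_eq_subst2: "finite_coeffs2 h \<Longrightarrow> swap2 h = subst2 (0, 1, 0) (1, 0, 0) h"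
  by (erule finite_coeffs2_induct)
     (simp_all del: plus_fun_apply
      add: subst2_add subst2_shiftL2 subst2_shiftM2 mult_form_shiftL2 mult_form_shiftM2
        swap2_add swap2_const2 swap2_shiftL2 swap2_shiftM2)

lemma subst2_lift2: "finite_coeffs f \<Longrightarrow> subst2 u v (lift2 f) = subst2 u v' (lift2 f)"
  by (erule finite_coeffs_induct)
     (simp_all del: plus_fun_apply
      add: lift2_add lift2_const1 lift2_shiftL subst2_add subst2_shiftL2 finite_coeffs2_lift2)

section \<open>The substitution \<lambda> := -\<lambda>-\<partial>\<close>

abbreviation sneg :: "(nat \<Rightarrow> 'r) \<Rightarrow> nat \<Rightarrow> 'r" where
  "sneg \<equiv> subst_neg scale D"

lemma sneg_eq_sum:
  assumes "\<forall>n. f n \<noteq> 0 \<longrightarrow> n < N"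
  shows "sneg f k = (\<Sum>n<N. scale ((-1) ^ n * of_nat (n choose k)) ((D ^^ (n - k)) (f n)))"
  unfolding subst_neg_def
proof (rule sum.mono_neutral_left)
  show "{n. k \<le> n \<and> f n \<noteq> 0} \<subseteq> {..<N}" using assms by auto
  show "\<forall>i \<in> {..<N} - {n. k \<le> n \<and> f n \<noteq> 0}.
      scale ((-1) ^ i * of_nat (i choose k)) ((D ^^ (i - k)) (f i)) = 0"
  proof
    fix i assume "i \<in> {..<N} - {n. k \<le> n \<and> f n \<noteq> 0}"
    then have "i < k \<or> f i = 0" by auto
    then show "scale ((-1) ^ i * of_nat (i choose k)) ((D ^^ (i - k)) (f i)) = 0"
      by (auto simp: binomial_eq_0)
  qed
qed simp

lemma sneg_0 [simp]: "sneg 0 = 0"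
  by (simp add: subst_neg_def fun_eq_iff)

lemma finite_coeffs_sneg: "finite_coeffs f \<Longrightarrow> finite_coeffs (sneg f)"
proof -
  assume "finite_coeffs f"
  then obtain N where N: "\<forall>n. f n \<noteq> 0 \<longrightarrow> n < N" by (rule finite_coeffs_bound)
  have zero: "sneg f k = 0" if "N \<le> k" for k
  proof -
    have empty: "{n. k \<le> n \<and> f n \<noteq> 0} = {}" using N that by fastforce
    show ?thesis unfolding subst_neg_def empty by simp
  qed
  have "{n. sneg f n \<noteq> 0} \<subseteq> {..<N}"
  proof
    fix n assume "n \<in> {n. sneg f n \<noteq> 0}"
    then show "n \<in> {..<N}" using zero[of n] by (cases "N \<le> n") auto
  qed
  then show ?thesis unfolding finite_coeffs_def using finite_subset by blast
qed

lemma sneg_add: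
  assumes "finite_coeffs f" and "finite_coeffs g"
  shows "sneg (f + g) = sneg f + sneg g"
proof -
  obtain N where B1: "\<forall>n. f n \<noteq> 0 \<longrightarrow> n < N" and B2: "\<forall>n. g n \<noteq> 0 \<longrightarrow> n < N"
    and B: "\<forall>n. (f + g) n \<noteq> 0 \<longrightarrow> n < N"
    using finite_coeffs_bound_add[OF assms] by blast
  show ?thesis
    by (simp add: fun_eq_iff sneg_eq_sum[OF B] sneg_eq_sum[OF B1] sneg_eq_sum[OF B2]
        module_hom.add[OF module_hom_funpow_D] scale_right_distrib sum.distrib)
qed

lemma sneg_map:
  assumes "module_hom scale scale \<phi>" and "\<And>x. \<phi> (D x) = D (\<phi> x)" and "finite_coeffs f"
  shows "sneg (\<lambda>n. \<phi> (f n)) = (\<lambda>k. \<phi> (sneg f k))"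
proof -
  interpret \<phi>: module_hom scale scale \<phi> by fact
  have \<phi>_funpow_D: "\<phi> ((D ^^ j) x) = (D ^^ j) (\<phi> x)" for j x
    by (induct j) (simp_all add: assms(2))
  obtain N where N: "\<forall>n. f n \<noteq> 0 \<longrightarrow> n < N" using finite_coeffs_bound[OF assms(3)] by blast
  have N': "\<forall>n. \<phi> (f n) \<noteq> 0 \<longrightarrow> n < N"
  proof (intro allI impI)
    fix n assume "\<phi> (f n) \<noteq> 0"
    then have "f n \<noteq> 0" by auto
    then show "n < N" using N by blast
  qed
  show ?thesis
    by (simp add: fun_eq_iff sneg_eq_sum[OF N] sneg_eq_sum[OF N'] \<phi>.sum \<phi>.scale \<phi>_funpow_D)
qed

lemma sneg_scale:
  "finite_coeffs f \<Longrightarrow> sneg (\<lambda>n. scale c (f n)) = (\<lambda>k. scale c (sneg f k))"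
  by (rule sneg_map) (simp_all add: D.scale)

lemma sneg_D: "finite_coeffs f \<Longrightarrow> sneg (\<lambda>n. D (f n)) = (\<lambda>k. D (sneg f k))"
  by (rule sneg_map) (simp_all add: D.module_hom_axioms)

lemma sneg_uminus:
  assumes "finite_coeffs f"
  shows "sneg (- f) = - sneg f"
proof -
  have "sneg (- f) = sneg (\<lambda>n. scale (-1) (f n))"
    by (rule arg_cong[where f = sneg]) (simp add: fun_eq_iff)
  also have "\<dots> = (\<lambda>k. scale (-1) (sneg f k))" by (rule sneg_scale[OF assms])
  also have "\<dots> = - sneg f" by (simp add: fun_eq_iff)
  finally show ?thesis .
qed

lemma sneg_diff:
  assumes "finite_coeffs f" and "finite_coeffs g"
  shows "sneg (f - g) = sneg f - sneg g"
proof -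
  have "finite_coeffs (- g)" using assms(2) by (rule finite_coeffs_mono) simp
  then show ?thesis by (simp only: diff_conv_add_uminus sneg_add assms sneg_uminus)
qed

lemma sneg_const1: "sneg (const1 c) = const1 c"
proof -
  have B: "\<forall>n. const1 c n \<noteq> 0 \<longrightarrow> n < 1" by (simp add: const1_def)
  have "sneg (const1 c) k = const1 c k" for k
    by (cases k) (simp_all add: sneg_eq_sum[OF B] const1_def)
  then show ?thesis by (simp add: fun_eq_iff)
qed

text \<open>Pascal's rule, in the form needed to expand (-\<lambda>-\<partial>)^(n+1) = (-\<lambda>-\<partial>) (-\<lambda>-\<partial>)^n.\<close>
lemma sneg_coeff_Suc:
  "scale ((-1) ^ Suc n * of_nat (Suc n choose Suc k)) ((D ^^ (Suc n - Suc k)) x)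
     = - scale ((-1) ^ n * of_nat (n choose k)) ((D ^^ (n - k)) x)
       - D (scale ((-1) ^ n * of_nat (n choose Suc k)) ((D ^^ (n - Suc k)) x))"
proof (cases "k < n")
  case True
  then have "n - k = Suc (n - Suc k)" by simp
  then show ?thesis by (simp add: D.scale scale_left_distrib algebra_simps)
next
  case False
  then have c1: "n choose Suc k = 0" by simp
  then have c2: "Suc n choose Suc k = n choose k" by simp
  show ?thesis using False by (simp add: c1 c2 D.scale del: binomial_Suc_Suc)
qed

lemma sneg_shiftL:
  assumes "finite_coeffs f"
  shows "sneg (shiftL f) = (\<lambda>k. - shiftL (sneg f) k - D (sneg f k))"
proof -
  obtain N where N: "\<forall>n. f n \<noteq> 0 \<longrightarrow> n < N" using finite_coeffs_bound[OF assms] by blast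
  have B: "\<forall>n. shiftL f n \<noteq> 0 \<longrightarrow> n < Suc N" using N by (auto simp: shiftL_def)
  let ?t = "\<lambda>k n. scale ((-1) ^ n * of_nat (n choose k)) ((D ^^ (n - k)) (f n))"
  let ?s = "\<lambda>k n. scale ((-1) ^ Suc n * of_nat (Suc n choose k)) ((D ^^ (Suc n - k)) (f n))"
  have shift: "sneg (shiftL f) k = (\<Sum>n<N. ?s k n)" for k
    by (simp add: sneg_eq_sum[OF B] sum.lessThan_Suc_shift shiftL_def del: sum.lessThan_Suc)
  have "sneg (shiftL f) k = - shiftL (sneg f) k - D (sneg f k)" for k
  proof (cases k)
    case 0
    then have "?s k n = - D (?t k n)" for n by (simp add: D.scale)
    then show ?thesis using 0 by (simp add: shift sneg_eq_sum[OF N] D.sum D.scale shiftL_def sum_negf)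
  next
    case (Suc k')
    have "(\<Sum>n<N. ?s k n) = (\<Sum>n<N. - ?t k' n - D (?t k n))"
      unfolding Suc by (rule sum.cong[OF refl sneg_coeff_Suc])
    also have "\<dots> = - (\<Sum>n<N. ?t k' n) - D (\<Sum>n<N. ?t k n)"
      by (simp only: sum_subtractf sum_negf D.sum)
    also have "\<dots> = - shiftL (sneg f) k - D (sneg f k)"
      using Suc by (simp only: sneg_eq_sum[OF N] shiftL_def) simp
    finally show ?thesis by (simp only: shift)
  qed
  then show ?thesis by (simp add: fun_eq_iff)
qed

definition sneg2 :: "(nat \<Rightarrow> nat \<Rightarrow> 'r) \<Rightarrow> nat \<Rightarrow> nat \<Rightarrow> 'r" where
  "sneg2 H p q = sneg (\<lambda>a. H a q) p"

lemma sneg2_add: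
  assumes "finite_coeffs2 f" and "finite_coeffs2 g"
  shows "sneg2 (f + g) = sneg2 f + sneg2 g"
proof -
  have col: "(\<lambda>a. (f + g) a q) = (\<lambda>a. f a q) + (\<lambda>a. g a q)" for q by (simp add: fun_eq_iff)
  have "sneg2 (f + g) p q = sneg2 f p q + sneg2 g p q" for p q
    unfolding sneg2_def col sneg_add[OF finite_coeffs_column[OF assms(1)] finite_coeffs_column[OF assms(2)]]
    by (rule plus_fun_apply)
  then show ?thesis by (simp add: fun_eq_iff)
qed

lemma sneg2_const2: "sneg2 (const2 c) = const2 c"
proof -
  have "(\<lambda>a. const2 c a q) = (if q = 0 then const1 c else 0)" for q
    by (auto simp: fun_eq_iff const2_def const1_def)
  then show ?thesis
    by (auto simp: sneg2_def fun_eq_iff sneg_const1 const1_def const2_def)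
qed

lemma sneg2_shiftL2: "finite_coeffs2 f \<Longrightarrow> sneg2 (shiftL2 f) = mult_form (-1, 0, -1) (sneg2 f)"
proof -
  assume f: "finite_coeffs2 f"
  have col: "(\<lambda>a. shiftL2 f a q) = shiftL (\<lambda>a. f a q)" for q
    by (simp add: fun_eq_iff shiftL2_def shiftL_def)
  have "sneg2 (shiftL2 f) p q = mult_form (-1, 0, -1) (sneg2 f) p q" for p q
  proof -
    have "sneg2 (shiftL2 f) p q = sneg (shiftL (\<lambda>a. f a q)) p" by (simp only: sneg2_def col)
    also have "\<dots> = - shiftL (sneg (\<lambda>a. f a q)) p - D (sneg (\<lambda>a. f a q) p)"
      by (simp only: sneg_shiftL[OF finite_coeffs_column[OF f]])
    also have "\<dots> = mult_form (-1, 0, -1) (sneg2 f) p q"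
      by (simp add: sneg2_def shiftL2_def shiftM2_def shiftL_def)
    finally show ?thesis .
  qed
  then show ?thesis by (simp add: fun_eq_iff)
qed

lemma sneg2_shiftM2: "sneg2 (shiftM2 f) = shiftM2 (sneg2 f)"
proof -
  have "(\<lambda>a. shiftM2 f a q) = (if q = 0 then 0 else (\<lambda>a. f a (q - 1)))" for q
    by (simp add: fun_eq_iff shiftM2_def)
  then show ?thesis
    by (simp add: fun_eq_iff sneg2_def shiftM2_def subst_neg_def)
qed

lemma sneg2_eq_subst2: "finite_coeffs2 H \<Longrightarrow> sneg2 H = subst2 (-1, 0, -1) (0, 1, 0) H"
  by (erule finite_coeffs2_induct)
     (simp_all del: plus_fun_apply add: sneg2_add sneg2_const2 sneg2_shiftL2 sneg2_shiftM2
      subst2_add subst2_shiftL2 subst2_shiftM2 mult_form_shiftM2)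

lemma sneg2_lift2: "sneg2 (lift2 f) = lift2 (sneg f)"
proof -
  have "(\<lambda>a. lift2 f a q) = (if q = 0 then f else 0)" for q by (simp add: fun_eq_iff lift2_def)
  then show ?thesis by (simp add: sneg2_def fun_eq_iff lift2_def subst_neg_def)
qed

lemma lift2_sneg: "finite_coeffs f \<Longrightarrow> lift2 (sneg f) = subst2 (-1, 0, -1) (0, 1, 0) (lift2 f)"
  by (simp add: sneg2_lift2[symmetric] sneg2_eq_subst2 finite_coeffs2_lift2)

text \<open>Substituting \<lambda> := -\<lambda>-\<partial> twice gives back \<lambda>, since the form -\<lambda>-\<partial> is an involution.\<close>
lemma sneg_sneg: "finite_coeffs f \<Longrightarrow> sneg (sneg f) = f"
proof -
  assume f: "finite_coeffs f"
  have "lift2 (sneg (sneg f)) = subst2 (-1, 0, -1) (0, 1, 0) (subst2 (-1, 0, -1) (0, 1, 0) (lift2 f))"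
    by (simp add: lift2_sneg f finite_coeffs_sneg)
  also have "\<dots> = lift2 f"
    by (simp add: subst2_subst2 subst2_id finite_coeffs2_lift2 f)
  finally show ?thesis by (rule lift2_inject)
qed

lemma sneg_rows: "finite_coeffs2 H \<Longrightarrow> (\<lambda>p q. sneg (H p) q) = subst2 (1, 0, 0) (0, -1, -1) H"
proof -
  assume H: "finite_coeffs2 H"
  have "(\<lambda>p q. sneg (H p) q) = swap2 (sneg2 (swap2 H))"
    by (simp add: sneg2_def swap2_def fun_eq_iff)
  also have "\<dots> = subst2 (0, 1, 0) (1, 0, 0) (subst2 (-1, 0, -1) (0, 1, 0) (subst2 (0, 1, 0) (1, 0, 0) H))"
    by (simp add: swap2_eq_subst2 sneg2_eq_subst2 H finite_coeffs2_subst2)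
  also have "\<dots> = subst2 (1, 0, 0) (0, -1, -1) H"
    by (simp add: subst2_subst2 H finite_coeffs2_subst2)
  finally show ?thesis .
qed

section \<open>\<lambda>-products\<close>

definition bilinear_lprod :: "('r \<Rightarrow> 'r \<Rightarrow> nat \<Rightarrow> 'r) \<Rightarrow> bool" where
  "bilinear_lprod g \<longleftrightarrow> (\<forall>x y. finite_coeffs (g x y))
     \<and> (\<forall>x u v. g x (u + v) = g x u + g x v) \<and> (\<forall>x u c. g x (scale c u) = (\<lambda>n. scale c (g x u n)))
     \<and> (\<forall>u v z. g (u + v) z = g u z + g v z) \<and> (\<forall>u c z. g (scale c u) z = (\<lambda>n. scale c (g u z n)))"

definition sesqui_left :: "('r \<Rightarrow> 'r \<Rightarrow> nat \<Rightarrow> 'r) \<Rightarrow> bool" where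
  "sesqui_left g \<longleftrightarrow> (\<forall>u z. g (D u) z = - shiftL (g u z))"

definition sesqui_right :: "('r \<Rightarrow> 'r \<Rightarrow> nat \<Rightarrow> 'r) \<Rightarrow> bool" where
  "sesqui_right g \<longleftrightarrow> (\<forall>x u. g x (D u) = (\<lambda>n. D (g x u n)) + shiftL (g x u))"

context
  fixes g :: "'r \<Rightarrow> 'r \<Rightarrow> nat \<Rightarrow> 'r"
  assumes g: "bilinear_lprod g"
begin

lemma lprod_finite: "finite_coeffs (g x y)"
  using g by (simp add: bilinear_lprod_def)

lemma lprod_add_right: "g x (u + v) = g x u + g x v"
  using g by (simp add: bilinear_lprod_def)

lemma lprod_add_left: "g (u + v) z = g u z + g v z"
  using g by (simp add: bilinear_lprod_def)

lemma lprod_scale_right: "g x (scale c u) = (\<lambda>n. scale c (g x u n))"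
  using g by (simp add: bilinear_lprod_def)

lemma lprod_scale_left: "g (scale c u) z = (\<lambda>n. scale c (g u z n))"
  using g by (simp add: bilinear_lprod_def)

lemma lprod_zero_right: "g x 0 = 0"
  using lprod_add_right[of x 0 0] by simp

lemma lprod_zero_left: "g 0 z = 0"
  using lprod_add_left[of 0 0 z] by simp

lemma lprod_diff_right: "g x (u - v) = g x u - g x v"
  using lprod_add_right[of x "u - v" v] by (simp add: algebra_simps)

lemma lprod_diff_left: "g (u - v) z = g u z - g v z"
  using lprod_add_left[of "u - v" v z] by (simp add: algebra_simps)

lemma lprod_uminus_right: "g x (- u) = - g x u"
  using lprod_diff_right[of x 0 u] by (simp add: lprod_zero_right)

lemma lprod_uminus_left: "g (- u) z = - g u z"
  using lprod_diff_left[of 0 u z] by (simp add: lprod_zero_left)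

end

text \<open>x_\<lambda> f(\<mu>) and f(\<mu>)_\<lambda> z for f in R[\<mu>], as elements of R[\<lambda>,\<mu>]; and K(\<lambda>+\<mu>) for K in R[\<lambda>].\<close>
definition lmul :: "('r \<Rightarrow> 'r \<Rightarrow> nat \<Rightarrow> 'r) \<Rightarrow> 'r \<Rightarrow> (nat \<Rightarrow> 'r) \<Rightarrow> nat \<Rightarrow> nat \<Rightarrow> 'r" where
  "lmul g x f a b = g x (f b) a"

definition rmul :: "('r \<Rightarrow> 'r \<Rightarrow> nat \<Rightarrow> 'r) \<Rightarrow> 'r \<Rightarrow> (nat \<Rightarrow> 'r) \<Rightarrow> nat \<Rightarrow> nat \<Rightarrow> 'r" where
  "rmul g z f a b = g (f b) z a"

definition subst_plus :: "(nat \<Rightarrow> 'r) \<Rightarrow> nat \<Rightarrow> nat \<Rightarrow> 'r" where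
  "subst_plus K i j = scale (of_nat ((i + j) choose j)) (K (i + j))"

lemma finite_coeffs2_lmul: "bilinear_lprod g \<Longrightarrow> finite_coeffs f \<Longrightarrow> finite_coeffs2 (lmul g x f)"
  unfolding lmul_def by (rule finite_coeffs2_columns) (auto simp: lprod_finite lprod_zero_right)

lemma finite_coeffs2_rmul: "bilinear_lprod g \<Longrightarrow> finite_coeffs f \<Longrightarrow> finite_coeffs2 (rmul g z f)"
  unfolding rmul_def
  by (rule finite_coeffs2_columns[where G = "\<lambda>u. g u z"]) (auto simp: lprod_finite lprod_zero_left)

lemma lmul_add: "bilinear_lprod g \<Longrightarrow> lmul g x (f1 + f2) = lmul g x f1 + lmul g x f2"
  by (simp add: lmul_def fun_eq_iff lprod_add_right)

lemma rmul_add: "bilinear_lprod g \<Longrightarrow> rmul g z (f1 + f2) = rmul g z f1 + rmul g z f2"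
  by (simp add: rmul_def fun_eq_iff lprod_add_left)

lemma lmul_const1: "bilinear_lprod g \<Longrightarrow> lmul g x (const1 c) = lift2 (g x c)"
  by (simp add: lmul_def fun_eq_iff const1_def lift2_def lprod_zero_right)

lemma rmul_const1: "bilinear_lprod g \<Longrightarrow> rmul g z (const1 c) = lift2 (g c z)"
  by (simp add: rmul_def fun_eq_iff const1_def lift2_def lprod_zero_left)

lemma lmul_shiftL: "bilinear_lprod g \<Longrightarrow> lmul g x (shiftL f) = shiftM2 (lmul g x f)"
  by (simp add: lmul_def fun_eq_iff shiftL_def shiftM2_def lprod_zero_right)

lemma rmul_shiftL: "bilinear_lprod g \<Longrightarrow> rmul g z (shiftL f) = shiftM2 (rmul g z f)"
  by (simp add: rmul_def fun_eq_iff shiftL_def shiftM2_def lprod_zero_left)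

text \<open>x_\<lambda> f(-\<mu>-\<partial>) is x_\<lambda> f(\<mu>) with \<mu> := -\<lambda>-\<mu>-\<partial>, because \<partial> acting on the right factor
  becomes \<partial> + \<lambda> on the product.\<close>
lemma lmul_sneg:
  assumes g: "bilinear_lprod g" "sesqui_right g" and f: "finite_coeffs f"
  shows "lmul g x (sneg f) = subst2 (1, 0, 0) (-1, -1, -1) (lmul g x f)"
  using f
proof (induction f rule: finite_coeffs_induct)
  case (const c)
  have "subst2 (1, 0, 0) (-1, -1, -1) (lift2 (g x c)) = subst2 (1, 0, 0) (0, 1, 0) (lift2 (g x c))"
    by (rule subst2_lift2) (simp add: lprod_finite g)
  then show ?case
    by (simp add: sneg_const1 lmul_const1 g subst2_id finite_coeffs2_lift2 lprod_finite)
next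
  case (add f1 f2)
  then show ?case
    by (simp del: plus_fun_apply
        add: sneg_add lmul_add g subst2_add finite_coeffs2_lmul finite_coeffs_sneg)
next
  case (shiftL f)
  have D_right: "g x (D u) n = D (g x u n) + shiftL (g x u) n" for u n
    using g(2) by (simp add: sesqui_right_def)
  have "lmul g x (sneg (shiftL f)) = mult_form (-1, -1, -1) (lmul g x (sneg f))"
    using shiftL.hyps
    by (auto simp: sneg_shiftL lmul_def fun_eq_iff shiftL2_def shiftM2_def shiftL_def
        lprod_diff_right lprod_uminus_right lprod_zero_right g D_right)
  also have "\<dots> = subst2 (1, 0, 0) (-1, -1, -1) (lmul g x (shiftL f))"
    by (simp add: shiftL.IH lmul_shiftL g subst2_shiftM2 finite_coeffs2_lmul shiftL.hyps)
  finally show ?case .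
qed

text \<open>f(-\<mu>-\<partial>)_\<lambda> z is f(\<mu>)_\<lambda> z with \<mu> := \<lambda>-\<mu>, because \<partial> acting on the left factor becomes -\<lambda>.\<close>
lemma rmul_sneg:
  assumes g: "bilinear_lprod g" "sesqui_left g" and f: "finite_coeffs f"
  shows "rmul g z (sneg f) = subst2 (1, 0, 0) (1, -1, 0) (rmul g z f)"
  using f
proof (induction f rule: finite_coeffs_induct)
  case (const c)
  have "subst2 (1, 0, 0) (1, -1, 0) (lift2 (g c z)) = subst2 (1, 0, 0) (0, 1, 0) (lift2 (g c z))"
    by (rule subst2_lift2) (simp add: lprod_finite g)
  then show ?case
    by (simp add: sneg_const1 rmul_const1 g subst2_id finite_coeffs2_lift2 lprod_finite)
next
  case (add f1 f2)
  then show ?case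
    by (simp del: plus_fun_apply
        add: sneg_add rmul_add g subst2_add finite_coeffs2_rmul finite_coeffs_sneg)
next
  case (shiftL f)
  have D_left: "g (D u) z n = - shiftL (g u z) n" for u n
    using g(2) by (simp add: sesqui_left_def)
  have "rmul g z (sneg (shiftL f)) = mult_form (1, -1, 0) (rmul g z (sneg f))"
    using shiftL.hyps
    by (auto simp: sneg_shiftL rmul_def fun_eq_iff shiftL2_def shiftM2_def shiftL_def
        lprod_diff_left lprod_uminus_left lprod_zero_left g D_left)
  also have "\<dots> = subst2 (1, 0, 0) (1, -1, 0) (rmul g z (shiftL f))"
    by (simp add: shiftL.IH rmul_shiftL g subst2_shiftM2 finite_coeffs2_rmul shiftL.hyps)
  finally show ?case .
qed

lemma subst_plus_add: "subst_plus (f + g) = subst_plus f + subst_plus g"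
  by (simp add: subst_plus_def fun_eq_iff scale_right_distrib)

lemma subst_plus_const1: "subst_plus (const1 c) = const2 c"
  by (auto simp: subst_plus_def fun_eq_iff const1_def const2_def)

lemma subst_plus_shiftL: "subst_plus (shiftL K) = mult_form (1, 1, 0) (subst_plus K)"
proof -
  have "subst_plus (shiftL K) i j = mult_form (1, 1, 0) (subst_plus K) i j" for i j
  proof (cases i)
    case 0
    then show ?thesis by (cases j) (simp_all add: subst_plus_def shiftL2_def shiftM2_def shiftL_def)
  next
    case (Suc i')
    show ?thesis
    proof (cases j)
      case 0
      then show ?thesis using Suc by (simp add: subst_plus_def shiftL2_def shiftM2_def shiftL_def)
    next
      case (Suc j')
      have "Suc i' + Suc j' choose Suc j' = (i' + Suc j' choose Suc j') + (Suc i' + j' choose j')"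
        by simp
      then show ?thesis using Suc \<open>i = Suc i'\<close>
        by (simp only: subst_plus_def mult_form_apply shiftL2_def shiftM2_def shiftL_def)
           (simp add: scale_left_distrib)
    qed
  qed
  then show ?thesis by (simp add: fun_eq_iff)
qed

lemma subst_plus_eq_subst2: "finite_coeffs K \<Longrightarrow> subst_plus K = subst2 (1, 1, 0) (0, 1, 0) (lift2 K)"
  by (erule finite_coeffs_induct)
     (simp_all del: plus_fun_apply add: subst_plus_add lift2_add subst2_add finite_coeffs2_lift2
      subst_plus_const1 lift2_const1 subst_plus_shiftL lift2_shiftL subst2_shiftL2)

lemma plus_subst_add:
  "bilinear_lprod g \<Longrightarrow> plus_subst scale g (d1 + d2) z = plus_subst scale g d1 z + plus_subst scale g d2 z"
  by (simp add: plus_subst_def fun_eq_iff lprod_add_left scale_right_distrib sum.distrib)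

lemma plus_subst_const1: "bilinear_lprod g \<Longrightarrow> plus_subst scale g (const1 c) z = subst_plus (g c z)"
proof -
  assume g: "bilinear_lprod g"
  have "plus_subst scale g (const1 c) z i j = subst_plus (g c z) i j" for i j
  proof -
    have "plus_subst scale g (const1 c) z i j
        = (\<Sum>m\<le>i. if m = 0 then scale (of_nat ((i + j) choose j)) (g c z (i + j)) else 0)"
      unfolding plus_subst_def by (rule sum.cong) (auto simp: const1_def g lprod_zero_left)
    also have "\<dots> = subst_plus (g c z) i j" by (simp add: subst_plus_def)
    finally show ?thesis .
  qed
  then show ?thesis by (simp add: fun_eq_iff)
qed

lemma plus_subst_shiftL:
  "bilinear_lprod g \<Longrightarrow> plus_subst scale g (shiftL d) z = shiftL2 (plus_subst scale g d z)"
proof -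
  assume g: "bilinear_lprod g"
  have "plus_subst scale g (shiftL d) z i j = shiftL2 (plus_subst scale g d z) i j" for i j
  proof (cases i)
    case 0
    then show ?thesis by (simp add: plus_subst_def shiftL_def shiftL2_def g lprod_zero_left)
  next
    case (Suc i')
    show ?thesis unfolding plus_subst_def Suc
      by (subst sum.atMost_Suc_shift) (simp add: shiftL_def shiftL2_def g lprod_zero_left)
  qed
  then show ?thesis by (simp add: fun_eq_iff)
qed

lemma plus_subst_eq_subst2:
  assumes g: "bilinear_lprod g" and d: "finite_coeffs d"
  shows "plus_subst scale g d z = subst2 (1, 1, 0) (1, 0, 0) (rmul g z d)"
  using d
proof (induction d rule: finite_coeffs_induct)
  case (const c)
  have "subst2 (1, 1, 0) (1, 0, 0) (lift2 (g c z)) = subst2 (1, 1, 0) (0, 1, 0) (lift2 (g c z))"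
    by (rule subst2_lift2) (simp add: lprod_finite g)
  then show ?case
    by (simp add: plus_subst_const1 g rmul_const1 subst_plus_eq_subst2 lprod_finite)
next
  case (add f1 f2)
  then show ?case
    by (simp del: plus_fun_apply add: plus_subst_add rmul_add g subst2_add finite_coeffs2_rmul)
next
  case (shiftL f)
  have "plus_subst scale g (shiftL f) z = shiftL2 (subst2 (1, 1, 0) (1, 0, 0) (rmul g z f))"
    by (simp add: plus_subst_shiftL g shiftL.IH)
  also have "\<dots> = subst2 (1, 1, 0) (1, 0, 0) (rmul g z (shiftL f))"
    by (simp add: rmul_shiftL g subst2_shiftM2 finite_coeffs2_rmul shiftL.hyps mult_form_shiftL2)
  finally show ?case .
qed

lemma plus_subst_sneg:
  assumes g: "bilinear_lprod g" "sesqui_left g" and f: "finite_coeffs f"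
  shows "plus_subst scale g (sneg f) z = swap2 (plus_subst scale g f z)"
proof -
  have Y: "finite_coeffs2 (rmul g z f)" by (rule finite_coeffs2_rmul[OF g(1) f])
  have "plus_subst scale g (sneg f) z = subst2 (1, 1, 0) (1, 0, 0) (subst2 (1, 0, 0) (1, -1, 0) (rmul g z f))"
    by (simp add: plus_subst_eq_subst2 rmul_sneg g f finite_coeffs_sneg)
  also have "\<dots> = subst2 (0, 1, 0) (1, 0, 0) (subst2 (1, 1, 0) (1, 0, 0) (rmul g z f))"
    by (simp add: subst2_subst2 Y finite_coeffs2_subst2)
  also have "\<dots> = swap2 (plus_subst scale g f z)"
    by (simp add: plus_subst_eq_subst2 g f swap2_eq_subst2 finite_coeffs2_subst2)
  finally show ?thesis .
qed

definition opposite :: "('r \<Rightarrow> 'r \<Rightarrow> nat \<Rightarrow> 'r) \<Rightarrow> 'r \<Rightarrow> 'r \<Rightarrow> nat \<Rightarrow> 'r" where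
  "opposite g u v = sneg (g v u)"

definition commutator :: "('r \<Rightarrow> 'r \<Rightarrow> nat \<Rightarrow> 'r) \<Rightarrow> complex \<Rightarrow> 'r \<Rightarrow> 'r \<Rightarrow> nat \<Rightarrow> 'r" where
  "commutator g s u v n = g u v n - scale s (opposite g u v n)"

lemma bilinear_lprod_opposite: "bilinear_lprod g \<Longrightarrow> bilinear_lprod (opposite g)"
  unfolding opposite_def
  by (simp add: bilinear_lprod_def finite_coeffs_sneg sneg_add sneg_scale)

lemma sesqui_left_opposite:
  assumes "bilinear_lprod g" and "sesqui_right g"
  shows "sesqui_left (opposite g)"
proof -
  have "sneg (g z (D u)) = - shiftL (sneg (g z u))" for u z
  proof -
    have "sneg (g z (D u)) = sneg ((\<lambda>n. D (g z u n)) + shiftL (g z u))"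
      using assms(2) by (simp add: sesqui_right_def)
    also have "\<dots> = sneg (\<lambda>n. D (g z u n)) + sneg (shiftL (g z u))"
      using assms(1) by (intro sneg_add) (auto simp: lprod_finite finite_coeffs_shiftL
          intro: finite_coeffs_mono[of "g z u"])
    also have "\<dots> = - shiftL (sneg (g z u))"
      using assms(1) by (simp add: sneg_D sneg_shiftL lprod_finite fun_eq_iff)
    finally show ?thesis .
  qed
  then show ?thesis by (simp add: sesqui_left_def opposite_def)
qed

lemma sesqui_right_opposite:
  assumes "bilinear_lprod g" and "sesqui_left g"
  shows "sesqui_right (opposite g)"
proof -
  have "sneg (g (D u) x) = (\<lambda>n. D (sneg (g u x) n)) + shiftL (sneg (g u x))" for x u
  proof -
    have "sneg (g (D u) x) = sneg (- shiftL (g u x))"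
      using assms(2) by (simp add: sesqui_left_def)
    also have "\<dots> = - sneg (shiftL (g u x))"
      using assms(1) by (simp add: sneg_uminus finite_coeffs_shiftL lprod_finite)
    also have "\<dots> = (\<lambda>n. D (sneg (g u x) n)) + shiftL (sneg (g u x))"
      using assms(1) by (simp add: sneg_shiftL lprod_finite fun_eq_iff)
    finally show ?thesis .
  qed
  then show ?thesis by (simp add: sesqui_right_def opposite_def)
qed

lemma lmul_opposite: "lmul (opposite g) x w = sneg2 (rmul g x w)"
  by (simp add: fun_eq_iff lmul_def opposite_def sneg2_def rmul_def)

lemma rmul_opposite: "rmul (opposite g) z w = sneg2 (lmul g z w)"
  by (simp add: fun_eq_iff rmul_def opposite_def sneg2_def lmul_def)

lemma commutator_skew:
  assumes "bilinear_lprod g" and "s * s = 1"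
  shows "commutator g s u v n = - scale s (sneg (commutator g s v u) n)"
proof -
  have fin: "finite_coeffs (g x y)" for x y by (rule lprod_finite[OF assms(1)])
  have "commutator g s v u = g v u - (\<lambda>n. scale s (sneg (g u v) n))"
    by (simp add: commutator_def opposite_def fun_eq_iff)
  then have "sneg (commutator g s v u) = sneg (g v u) - sneg (\<lambda>n. scale s (sneg (g u v) n))"
    by (simp add: sneg_diff fin finite_coeffs_sneg finite_coeffs_mono[of "sneg (g u v)"])
  also have "\<dots> = sneg (g v u) - (\<lambda>k. scale s (g u v k))"
    by (simp add: sneg_scale fin finite_coeffs_sneg sneg_sneg)
  finally show ?thesis
    using assms(2) by (simp add: commutator_def opposite_def scale_right_diff_distrib)
qed

lemma plus_subst_diff_lprod:
  "plus_subst scale (\<lambda>u v n. g1 u v n - scale s (g2 u v n)) d z i j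
     = plus_subst scale g1 d z i j - scale s (plus_subst scale g2 d z i j)"
  unfolding plus_subst_def
  by (simp add: sum_subtractf scale_sum_right scale_right_diff_distrib mult.commute)

lemma plus_subst_diff:
  "bilinear_lprod g \<Longrightarrow> plus_subst scale g (\<lambda>n. d1 n - scale s (d2 n)) z i j
     = plus_subst scale g d1 z i j - scale s (plus_subst scale g d2 z i j)"
  unfolding plus_subst_def
  by (simp add: lprod_diff_left lprod_scale_left sum_subtractf scale_sum_right scale_right_diff_distrib
      mult.commute)

lemma commutator_map:
  assumes "module_hom scale scale \<phi>" and "\<And>x. \<phi> (D x) = D (\<phi> x)"
    and "\<And>x y n. \<phi> (g x y n) = g (\<phi> x) (\<phi> y) n" and "bilinear_lprod g"
  shows "\<phi> (commutator g s u v n) = commutator g s (\<phi> u) (\<phi> v) n"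
proof -
  have "\<phi> (sneg (g v u) n) = sneg (g (\<phi> v) (\<phi> u)) n"
    using sneg_map[OF assms(1,2) lprod_finite[OF assms(4)]] by (simp add: assms(3) fun_eq_iff)
  then show ?thesis
    by (simp add: commutator_def opposite_def module_hom.diff[OF assms(1)] module_hom.scale[OF assms(1)]
        assms(3))
qed

end

section \<open>Associative conformal algebras\<close>

lemma jacobi_rearrangement:
  fixes L1 L2 L3 L4 R2 R3 :: "'a::ab_group_add" and a b c :: "'s::comm_ring_1"
  assumes "module scale" and "a * a = 1"
  shows "(L1 - scale c L2) - scale (a * b) (L3 - scale c L4)
       = ((L1 - scale a R2) - scale (b * c) (R3 - scale a L4))
         + scale a ((R2 - scale b L3) - scale (a * c) (L2 - scale b R3))"
proof -
  interpret module scale by fact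
  have aac: "a * (a * c) = c" using assms(2) by (metis mult.assoc mult_1)
  have aax: "a * (a * x) = x" for x using assms(2) by (metis mult.assoc mult_1)
  show ?thesis by (simp add: scale_right_diff_distrib aac aax algebra_simps)
qed

locale assoc_conf_algebra = cderiv_module scale D
  for scale :: "complex \<Rightarrow> 'r::ab_group_add \<Rightarrow> 'r" and D +
  fixes M :: "'r \<Rightarrow> 'r \<Rightarrow> nat \<Rightarrow> 'r"
  assumes M_bilinear: "bilinear_lprod M"
    and M_sesqui_left: "sesqui_left M"
    and M_sesqui_right: "sesqui_right M"
    and M_assoc: "lmul M x (M y z) = plus_subst scale M (M x y) z"
begin

lemma M_finite: "finite_coeffs (M x y)"
  by (rule lprod_finite[OF M_bilinear])

lemma assoc_sneg_right: "M x (sneg (M z y) q) p = sneg (M (M x z p) y) q"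
proof -
  let ?Y = "rmul M y (M x z)"
  have Y: "finite_coeffs2 ?Y" by (simp add: finite_coeffs2_rmul M_bilinear M_finite)
  have "lmul M x (sneg (M z y)) = subst2 (1, 0, 0) (-1, -1, -1) (subst2 (1, 1, 0) (1, 0, 0) ?Y)"
    by (simp add: lmul_sneg M_bilinear M_sesqui_right M_finite M_assoc plus_subst_eq_subst2)
  also have "\<dots> = subst2 (1, 0, 0) (0, -1, -1) (subst2 (0, 1, 0) (1, 0, 0) ?Y)"
    by (simp add: subst2_subst2 Y)
  also have "\<dots> = (\<lambda>p q. sneg (swap2 ?Y p) q)"
    by (simp add: sneg_rows swap2_eq_subst2 Y finite_coeffs2_swap2 finite_coeffs2_subst2)
  finally have "lmul M x (sneg (M z y)) p q = sneg (swap2 ?Y p) q" by simp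
  moreover have "swap2 ?Y p = M (M x z p) y" by (simp add: swap2_def rmul_def fun_eq_iff)
  ultimately show ?thesis by (simp add: lmul_def)
qed

lemma assoc_opposite:
  "lmul (opposite M) x (opposite M y z) = plus_subst scale (opposite M) (opposite M x y) z"
proof -
  let ?K = "lmul M z (M y x)"
  have K: "finite_coeffs2 ?K" by (simp add: finite_coeffs2_lmul M_bilinear M_finite)
  have Y: "rmul M x (M z y) = subst2 (0, 1, 0) (1, -1, 0) ?K"
  proof -
    have "subst2 (0, 1, 0) (1, -1, 0) ?K
        = subst2 (0, 1, 0) (1, -1, 0) (subst2 (1, 1, 0) (1, 0, 0) (rmul M x (M z y)))"
      by (simp add: M_assoc plus_subst_eq_subst2 M_bilinear M_finite)
    also have "\<dots> = rmul M x (M z y)"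
      by (simp add: subst2_subst2 subst2_id finite_coeffs2_rmul M_bilinear M_finite)
    finally show ?thesis by simp
  qed
  have "lmul (opposite M) x (opposite M y z) = sneg2 (rmul M x (sneg (M z y)))"
    by (simp add: lmul_opposite opposite_def)
  also have "\<dots> = sneg2 (subst2 (1, 0, 0) (1, -1, 0) (subst2 (0, 1, 0) (1, -1, 0) ?K))"
    by (simp add: rmul_sneg M_bilinear M_sesqui_left M_finite Y)
  also have "\<dots> = sneg2 (subst2 (1, -1, 0) (0, 1, 0) ?K)"
    by (simp add: subst2_subst2 K)
  also have "\<dots> = subst2 (-1, -1, -1) (0, 1, 0) ?K"
    by (simp add: sneg2_eq_subst2 finite_coeffs2_subst2 K subst2_subst2)
  also have "\<dots> = subst2 (1, 1, 0) (1, 0, 0) (sneg2 (subst2 (1, 0, 0) (-1, -1, -1) ?K))"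
    by (simp add: sneg2_eq_subst2 finite_coeffs2_subst2 K subst2_subst2)
  also have "\<dots> = subst2 (1, 1, 0) (1, 0, 0) (rmul (opposite M) z (opposite M x y))"
    by (simp add: rmul_opposite opposite_def lmul_sneg M_sesqui_right M_bilinear M_finite)
  also have "\<dots> = plus_subst scale (opposite M) (opposite M x y) z"
    by (rule plus_subst_eq_subst2[symmetric])
       (simp_all add: bilinear_lprod_opposite M_bilinear lprod_finite)
  finally show ?thesis .
qed

lemma opposite_plus_subst:
  "plus_subst scale (opposite M) (M x y) z p q = sneg (M (sneg (M z x) p) y) q"
proof -
  have "M x y = sneg (opposite M y x)" by (simp add: opposite_def sneg_sneg M_finite)
  then have "plus_subst scale (opposite M) (M x y) z
      = swap2 (plus_subst scale (opposite M) (opposite M y x) z)"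
    by (simp only:) (rule plus_subst_sneg, simp_all add: bilinear_lprod_opposite sesqui_left_opposite
        M_bilinear M_sesqui_right lprod_finite)
  also have "\<dots> = swap2 (lmul (opposite M) y (opposite M x z))"
    by (simp add: assoc_opposite)
  finally show ?thesis by (simp add: swap2_def lmul_def opposite_def)
qed

lemma plus_subst_sneg_assoc: "plus_subst scale M (sneg (M y x)) z p q = M y (M x z p) q"
proof -
  have "plus_subst scale M (sneg (M y x)) z = swap2 (plus_subst scale M (M y x) z)"
    by (rule plus_subst_sneg) (simp_all add: M_bilinear M_sesqui_left M_finite)
  also have "\<dots> = swap2 (lmul M y (M x z))" by (simp add: M_assoc)
  finally show ?thesis by (simp add: swap2_def lmul_def)
qed

text \<open>Expanding the commutators, every term is one of six products L1, ..., R3 by associativity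
  and the three re-association rules above; what remains is jacobi_rearrangement.\<close>
lemma commutator_jacobi:
  fixes a b c :: complex
  assumes "a * a = 1"
  shows "commutator M (a * b) X (commutator M c Y Z q) p
       = plus_subst scale (commutator M (b * c)) (commutator M a X Y) Z p q
         + scale a (commutator M (a * c) Y (commutator M b X Z p) q)"
proof -
  have fin: "finite_coeffs (M u v)" for u v by (rule M_finite)
  have fin_scale: "finite_coeffs (\<lambda>n. scale s (M u v n))" for s u v
    by (rule finite_coeffs_mono[OF fin[of u v]]) simp
  define L1 where "L1 = M X (M Y Z q) p"
  define L2 where "L2 = M X (sneg (M Z Y) q) p"
  define L3 where "L3 = sneg (M (M Y Z q) X) p"
  define L4 where "L4 = sneg (M (sneg (M Z Y) q) X) p"
  define R2 where "R2 = M Y (M X Z p) q"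
  define R3 where "R3 = sneg (M (sneg (M Z X) p) Y) q"
  have opposite_commutator:
    "opposite M W (commutator M s U V t) k
       = sneg (M (M U V t) W) k - scale s (sneg (M (opposite M U V t) W) k)"
    for W U V s t k
  proof -
    have "M (commutator M s U V t) W = M (M U V t) W - (\<lambda>n. scale s (M (opposite M U V t) W n))"
      by (simp add: commutator_def lprod_diff_left[OF M_bilinear] lprod_scale_left[OF M_bilinear] fun_eq_iff)
    then show ?thesis by (simp add: opposite_def sneg_diff fin fin_scale sneg_scale)
  qed
  have lhs: "commutator M (a * b) X (commutator M c Y Z q) p
      = (L1 - scale c L2) - scale (a * b) (L3 - scale c L4)"
    by (simp only: commutator_def[of M "a * b"] opposite_commutator)
       (simp add: commutator_def L1_def L2_def L3_def L4_def opposite_def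
        lprod_diff_right[OF M_bilinear] lprod_scale_right[OF M_bilinear])
  have "plus_subst scale (commutator M (b * c)) (commutator M a X Y) Z p q
      = (plus_subst scale M (M X Y) Z p q - scale a (plus_subst scale M (opposite M X Y) Z p q))
        - scale (b * c) (plus_subst scale (opposite M) (M X Y) Z p q
          - scale a (plus_subst scale (opposite M) (opposite M X Y) Z p q))"
    unfolding commutator_def
    by (simp only: plus_subst_diff_lprod plus_subst_diff M_bilinear bilinear_lprod_opposite)
  also have "\<dots> = (L1 - scale a R2) - scale (b * c) (R3 - scale a L4)"
    using M_assoc[of X Y Z] assoc_opposite[of X Y Z]
    by (simp add: L1_def R2_def R3_def L4_def lmul_def fun_eq_iff opposite_plus_subst
        plus_subst_sneg_assoc opposite_def)
  finally have rhs1: "plus_subst scale (commutator M (b * c)) (commutator M a X Y) Z p q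
      = (L1 - scale a R2) - scale (b * c) (R3 - scale a L4)" .
  have rhs2: "commutator M (a * c) Y (commutator M b X Z p) q
      = (R2 - scale b L3) - scale (a * c) (L2 - scale b R3)"
    using assoc_sneg_right[of Y Z X p q] assoc_sneg_right[of X Z Y q p]
    by (simp only: commutator_def[of M "a * c"] opposite_commutator)
       (simp add: commutator_def R2_def L3_def L2_def R3_def opposite_def
        lprod_diff_right[OF M_bilinear] lprod_scale_right[OF M_bilinear])
  show ?thesis
    unfolding lhs rhs1 rhs2 by (rule jacobi_rearrangement[OF module_axioms assms])
qed

end

section \<open>Graded modules and the super-commutator\<close>

locale graded_cderiv_module = cderiv_module scale D
  for scale :: "complex \<Rightarrow> 'r::ab_group_add \<Rightarrow> 'r" and D +
  fixes Rg :: "nat \<Rightarrow> 'r set"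
  assumes graded: "graded_CD_module scale D Rg"
begin

lemma csubspace_Rg: "i < 2 \<Longrightarrow> csubspace scale (Rg i)"
  using graded less_2_cases[of i] by (auto simp: graded_CD_module_def)

lemma Rg_zero: "i < 2 \<Longrightarrow> 0 \<in> Rg i"
  using csubspace_Rg by (simp add: csubspace_def)

lemma Rg_add: "i < 2 \<Longrightarrow> x \<in> Rg i \<Longrightarrow> y \<in> Rg i \<Longrightarrow> x + y \<in> Rg i"
  using csubspace_Rg by (simp add: csubspace_def)

lemma Rg_scale: "i < 2 \<Longrightarrow> x \<in> Rg i \<Longrightarrow> scale c x \<in> Rg i"
  using csubspace_Rg by (simp add: csubspace_def)

lemma Rg_diff:
  assumes "i < 2" "x \<in> Rg i" "y \<in> Rg i"
  shows "x - y \<in> Rg i"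
  using Rg_add[OF assms(1,2) Rg_scale[OF assms(1,3), of "-1"]] by simp

lemma Rg_sum: "i < 2 \<Longrightarrow> (\<And>t. t \<in> T \<Longrightarrow> F t \<in> Rg i) \<Longrightarrow> sum F T \<in> Rg i"
  by (induct T rule: infinite_finite_induct) (simp_all add: Rg_zero Rg_add)

lemma Rg_D: "i < 2 \<Longrightarrow> x \<in> Rg i \<Longrightarrow> D x \<in> Rg i"
proof -
  have "\<forall>i<2. D ` Rg i \<subseteq> Rg i" using graded by (simp add: graded_CD_module_def)
  then show "i < 2 \<Longrightarrow> x \<in> Rg i \<Longrightarrow> D x \<in> Rg i" by blast
qed

lemma Rg_funpow_D: "i < 2 \<Longrightarrow> x \<in> Rg i \<Longrightarrow> (D ^^ n) x \<in> Rg i"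
  by (induct n) (simp_all add: Rg_D)

lemma Rg_disjoint: "i < 2 \<Longrightarrow> x \<in> Rg i \<Longrightarrow> x \<in> Rg (1 - i) \<Longrightarrow> x = 0"
  using graded less_2_cases[of i] by (auto simp: graded_CD_module_def)

lemma Rg_decompose: "\<exists>x \<in> Rg 0. \<exists>y \<in> Rg 1. a = x + y"
  using graded by (simp add: graded_CD_module_def)

lemma sneg_Rg: "l < 2 \<Longrightarrow> (\<And>n. f n \<in> Rg l) \<Longrightarrow> sneg f k \<in> Rg l"
  unfolding subst_neg_def by (intro Rg_sum Rg_scale Rg_funpow_D)

lemma gcomp_eqI:
  assumes i: "i < 2" and x: "x \<in> Rg i" and ax: "a - x \<in> Rg (1 - i)"
  shows "gcomp Rg i a = x"
  unfolding gcomp_def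
proof (rule the_equality)
  show "x \<in> Rg i \<and> a - x \<in> Rg (1 - i)" using x ax by simp
next
  fix y assume y: "y \<in> Rg i \<and> a - y \<in> Rg (1 - i)"
  have in_i: "y - x \<in> Rg i" using Rg_diff[OF i] y x by blast
  have "1 - i < 2" by simp
  then have "(a - x) - (a - y) \<in> Rg (1 - i)" using Rg_diff[OF _ ax] y by blast
  then have "y - x \<in> Rg (1 - i)" by (simp add: algebra_simps)
  with in_i have "y - x = 0" by (rule Rg_disjoint[OF i])
  then show "y = x" by simp
qed

lemma gcomp_exists: "i < 2 \<Longrightarrow> \<exists>x. x \<in> Rg i \<and> a - x \<in> Rg (1 - i)"
  using Rg_decompose[of a] less_2_cases[of i] by (auto simp: algebra_simps)

lemma gcomp_Rg: "i < 2 \<Longrightarrow> gcomp Rg i a \<in> Rg i"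
  using gcomp_exists gcomp_eqI by metis

lemma gcomp_complement: "i < 2 \<Longrightarrow> a - gcomp Rg i a \<in> Rg (1 - i)"
  using gcomp_exists gcomp_eqI by metis

lemma gcomp_homogeneous:
  assumes "i < 2" and "j < 2" and "a \<in> Rg i"
  shows "gcomp Rg j a = (if j = i then a else 0)"
proof (cases "j = i")
  case True
  then show ?thesis using assms by (simp add: gcomp_eqI Rg_zero)
next
  case False
  then have "1 - j = i" using assms(1,2) by arith
  then show ?thesis using False assms by (simp add: gcomp_eqI Rg_zero)
qed

lemma gcomp_map:
  assumes "i < 2" and "\<And>x y. f (x - y) = f x - f y" and "\<And>j x. j < 2 \<Longrightarrow> x \<in> Rg j \<Longrightarrow> f x \<in> Rg j"
  shows "gcomp Rg i (f a) = f (gcomp Rg i a)"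
proof -
  have "f a - f (gcomp Rg i a) = f (a - gcomp Rg i a)" by (simp add: assms(2))
  also have "\<dots> \<in> Rg (1 - i)" using assms(1) by (intro assms(3) gcomp_complement) simp_all
  finally show ?thesis by (intro gcomp_eqI assms(1) assms(3) gcomp_Rg)
qed

lemma gcomp_add: "i < 2 \<Longrightarrow> gcomp Rg i (a + b) = gcomp Rg i a + gcomp Rg i b"
proof -
  assume i: "i < 2"
  have "(a + b) - (gcomp Rg i a + gcomp Rg i b) = (a - gcomp Rg i a) + (b - gcomp Rg i b)"
    by (simp add: algebra_simps)
  also have "\<dots> \<in> Rg (1 - i)" using i by (intro Rg_add gcomp_complement) simp_all
  finally show ?thesis by (intro gcomp_eqI i Rg_add gcomp_Rg)
qed

lemma gcomp_scale: "i < 2 \<Longrightarrow> gcomp Rg i (scale c a) = scale c (gcomp Rg i a)"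
  by (rule gcomp_map) (simp_all add: scale_right_diff_distrib Rg_scale)

lemma gcomp_D: "i < 2 \<Longrightarrow> gcomp Rg i (D a) = D (gcomp Rg i a)"
  by (rule gcomp_map) (simp_all add: D.diff Rg_D)

lemma graded_inverse:
  assumes fg: "\<And>x. f (g x) = x" and gf: "\<And>x. g (f x) = x" and f_add: "\<And>x y. f (x + y) = f x + f y"
    and f_Rg: "\<And>j x. j < 2 \<Longrightarrow> x \<in> Rg j \<Longrightarrow> f x \<in> Rg j" and i: "i < 2" and x: "x \<in> Rg i"
  shows "g x \<in> Rg i"
proof -
  have g0: "g 0 = 0" using gf[of 0] f_add[of 0 0] by simp
  obtain y0 y1 where y0: "y0 \<in> Rg 0" and y1: "y1 \<in> Rg 1" and y: "g x = y0 + y1"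
    using Rg_decompose by blast
  have x_eq: "x = f y0 + f y1" using fg[of x] y f_add by simp
  have r0: "f y0 \<in> Rg 0" and r1: "f y1 \<in> Rg 1" using f_Rg y0 y1 by auto
  show ?thesis
  proof (cases "i = 0")
    case True
    have "f y1 = x - f y0" using x_eq by (simp add: algebra_simps)
    also have "\<dots> \<in> Rg 0" using Rg_diff[of 0 x "f y0"] x True r0 by simp
    finally have "f y1 = 0" using r1 Rg_disjoint[of 0] by simp
    then have "y1 = 0" using gf[of y1] g0 by simp
    then show ?thesis using y y0 True by simp
  next
    case False
    then have i1: "i = 1" using i by arith
    have "f y0 = x - f y1" using x_eq by (simp add: algebra_simps)
    also have "\<dots> \<in> Rg 1" using Rg_diff[of 1 x "f y1"] x i1 r1 by simp
    finally have "f y0 = 0" using r0 Rg_disjoint[of 0] by simp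
    then have "y0 = 0" using gf[of y0] g0 by simp
    then show ?thesis using y y1 i1 by simp
  qed
qed

definition super_bracket :: "('r \<Rightarrow> 'r \<Rightarrow> nat \<Rightarrow> 'r) \<Rightarrow> 'r \<Rightarrow> 'r \<Rightarrow> nat \<Rightarrow> 'r" where
  "super_bracket g u v n = g u v n
     - (\<Sum>i<2. \<Sum>j<2. scale ((-1) ^ (i * j)) (opposite g (gcomp Rg i u) (gcomp Rg j v) n))"

context
  fixes g :: "'r \<Rightarrow> 'r \<Rightarrow> nat \<Rightarrow> 'r"
  assumes g: "bilinear_lprod g"
begin

lemma super_bracket_homogeneous:
  assumes "i < 2" and "j < 2" and "u \<in> Rg i" and "v \<in> Rg j"
  shows "super_bracket g u v n = commutator g ((-1) ^ (i * j)) u v n"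
proof -
  have zero: "opposite g 0 y = 0" "opposite g x 0 = 0" for x y
    by (simp_all add: opposite_def lprod_zero_left[OF g] lprod_zero_right[OF g])
  show ?thesis
    using less_2_cases[OF assms(1)] less_2_cases[OF assms(2)]
    by (auto simp: super_bracket_def commutator_def numeral_2_eq_2 zero
        gcomp_homogeneous[OF assms(1) _ assms(3)] gcomp_homogeneous[OF assms(2) _ assms(4)])
qed

lemma finite_coeffs_super_bracket: "finite_coeffs (super_bracket g u v)"
proof -
  let ?t = "\<lambda>i j n. scale ((-1) ^ (i * j)) (opposite g (gcomp Rg i u) (gcomp Rg j v) n)"
  have "finite_coeffs (?t i j)" for i j
    by (rule finite_coeffs_mono[OF lprod_finite[OF bilinear_lprod_opposite[OF g],
          of "gcomp Rg i u" "gcomp Rg j v"]]) simp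
  then have "finite_coeffs (g u v - (\<Sum>i<2. \<Sum>j<2. ?t i j))"
    by (intro finite_coeffs_diff lprod_finite[OF g] finite_coeffs_sum)
  moreover have "super_bracket g u v = g u v - (\<Sum>i<2. \<Sum>j<2. ?t i j)"
    by (simp add: fun_eq_iff super_bracket_def sum_fun_apply)
  ultimately show ?thesis by simp
qed

lemma super_bracket_add_left:
  "super_bracket g (x + y) v n = super_bracket g x v n + super_bracket g y v n"
  by (simp add: super_bracket_def numeral_2_eq_2 gcomp_add lprod_add_left[OF g]
      lprod_add_left[OF bilinear_lprod_opposite[OF g]] scale_right_distrib algebra_simps)

lemma super_bracket_add_right:
  "super_bracket g u (x + y) n = super_bracket g u x n + super_bracket g u y n"
  by (simp add: super_bracket_def numeral_2_eq_2 gcomp_add lprod_add_right[OF g]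
      lprod_add_right[OF bilinear_lprod_opposite[OF g]] scale_right_distrib algebra_simps)

lemma super_bracket_scale_left: "super_bracket g (scale c x) v n = scale c (super_bracket g x v n)"
  by (simp add: super_bracket_def numeral_2_eq_2 gcomp_scale lprod_scale_left[OF g]
      lprod_scale_left[OF bilinear_lprod_opposite[OF g]] scale_right_distrib
      scale_right_diff_distrib scale_left_commute)

lemma super_bracket_scale_right: "super_bracket g u (scale c x) n = scale c (super_bracket g u x n)"
  by (simp add: super_bracket_def numeral_2_eq_2 gcomp_scale lprod_scale_right[OF g]
      lprod_scale_right[OF bilinear_lprod_opposite[OF g]] scale_right_distrib
      scale_right_diff_distrib scale_left_commute)

lemma super_bracket_Rg:
  assumes g_Rg: "\<And>i j x y n. i < 2 \<Longrightarrow> j < 2 \<Longrightarrow> x \<in> Rg i \<Longrightarrow> y \<in> Rg j \<Longrightarrow> g x y n \<in> Rg ((i + j) mod 2)"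
    and "i < 2" and "j < 2" and "u \<in> Rg i" and "v \<in> Rg j"
  shows "super_bracket g u v n \<in> Rg ((i + j) mod 2)"
proof -
  have "g v u k \<in> Rg ((i + j) mod 2)" for k
    using g_Rg[of j i v u k] assms(2-5) by (simp add: add.commute)
  then have "opposite g u v n \<in> Rg ((i + j) mod 2)"
    unfolding opposite_def by (intro sneg_Rg) simp_all
  then show ?thesis
    using assms by (simp add: super_bracket_homogeneous commutator_def Rg_diff Rg_scale)
qed

lemma super_bracket_map:
  assumes \<phi>: "module_hom scale scale \<phi>" and \<phi>_D: "\<And>x. \<phi> (D x) = D (\<phi> x)"
    and \<phi>_Rg: "\<And>j x. j < 2 \<Longrightarrow> x \<in> Rg j \<Longrightarrow> \<phi> x \<in> Rg j"
    and \<phi>_g: "\<And>x y n. \<phi> (g x y n) = g (\<phi> x) (\<phi> y) n"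
  shows "\<phi> (super_bracket g u v n) = super_bracket g (\<phi> u) (\<phi> v) n"
proof -
  interpret \<phi>: module_hom scale scale \<phi> by fact
  have gcomp: "gcomp Rg i (\<phi> x) = \<phi> (gcomp Rg i x)" if "i < 2" for i x
    by (rule gcomp_map[OF that \<phi>.diff \<phi>_Rg])
  have opposite: "\<phi> (opposite g x y k) = opposite g (\<phi> x) (\<phi> y) k" for x y k
    using sneg_map[OF \<phi> \<phi>_D lprod_finite[OF g, of y x]]
    by (simp add: opposite_def \<phi>_g fun_eq_iff)
  show ?thesis
    by (simp add: super_bracket_def numeral_2_eq_2 gcomp \<phi>.diff \<phi>.add \<phi>.scale \<phi>_g opposite)
qed

lemma super_bracket_D_left:
  assumes "sesqui_left g" and "sesqui_right g"
  shows "super_bracket g (D u) v n = - shiftL (super_bracket g u v) n"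
proof -
  have opp: "sesqui_left (opposite g)" by (rule sesqui_left_opposite[OF g assms(2)])
  show ?thesis
    using assms(1) opp
    by (cases n) (simp_all add: super_bracket_def numeral_2_eq_2 gcomp_D sesqui_left_def shiftL_def
        scale_right_diff_distrib scale_right_distrib algebra_simps)
qed

lemma super_bracket_D_right:
  assumes "sesqui_left g" and "sesqui_right g"
  shows "super_bracket g u (D v) n = D (super_bracket g u v n) + shiftL (super_bracket g u v) n"
proof -
  have opp: "sesqui_right (opposite g)" by (rule sesqui_right_opposite[OF g assms(1)])
  show ?thesis
    using assms(2) opp
    by (cases n) (simp_all add: super_bracket_def numeral_2_eq_2 gcomp_D sesqui_right_def shiftL_def
        D.diff D.add D.scale scale_right_diff_distrib scale_right_distrib algebra_simps)
qed

end

end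

section \<open>Regular BiHom-associative conformal superalgebras\<close>

lemma koszul_signs:
  fixes i j k :: nat
  assumes "i < 2" "j < 2" "k < 2"
  shows "(-1::complex) ^ (i * ((j + k) mod 2)) = (-1) ^ (i * j) * (-1) ^ (i * k)"
    and "(-1::complex) ^ (((i + j) mod 2) * k) = (-1) ^ (i * k) * (-1) ^ (j * k)"
    and "(-1::complex) ^ (j * ((i + k) mod 2)) = (-1) ^ (i * j) * (-1) ^ (j * k)"
    and "(-1::complex) ^ (i * j) * (-1) ^ (i * j) = 1"
  using assms by (auto dest!: less_2_cases)

locale regular_bihom_assoc = graded_cderiv_module scale D Rg
  for scale :: "complex \<Rightarrow> 'r::ab_group_add \<Rightarrow> 'r" and D Rg +
  fixes m :: "'r \<Rightarrow> 'r \<Rightarrow> nat \<Rightarrow> 'r" and al be :: "'r \<Rightarrow> 'r"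
  assumes regular: "regular_BiHom_assoc_conf_super scale D Rg m al be"
begin

lemma m_lprod: "graded_lprod scale Rg m"
  and clin_al: "clin scale al" and clin_be: "clin scale be"
  and al_be: "al (be x) = be (al x)"
  and al_Rg: "i < 2 \<Longrightarrow> x \<in> Rg i \<Longrightarrow> al x \<in> Rg i"
  and be_Rg: "i < 2 \<Longrightarrow> x \<in> Rg i \<Longrightarrow> be x \<in> Rg i"
  and m_D_left: "m (D a) b n = - shiftL (m a b) n"
  and m_D_right: "m a (D b) n = D (m a b n) + shiftL (m a b) n"
  and al_D: "al (D x) = D (al x)" and be_D: "be (D x) = D (be x)"
  and al_m: "al (m a b n) = m (al a) (al b) n" and be_m: "be (m a b n) = m (be a) (be b) n"
  and m_assoc: "m (al a) (m b c j) i = plus_subst scale m (m a b) (be c) i j"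
  and bij_al: "bij al" and bij_be: "bij be"
  using regular unfolding regular_BiHom_assoc_conf_super_def BiHom_assoc_conf_super_def
  by (auto simp: fun_eq_iff image_subset_iff)

lemma al_inv [simp]: "al (inv al x) = x" and inv_al [simp]: "inv al (al x) = x"
  and be_inv [simp]: "be (inv be x) = x" and inv_be [simp]: "inv be (be x) = x"
  using bij_al bij_be by (simp_all add: bij_is_surj bij_is_inj surj_f_inv_f inv_f_f)

sublocale al: module_hom scale scale al
  using clin_al by (simp add: module_hom_iff module_axioms clin_def)

sublocale be: module_hom scale scale be
  using clin_be by (simp add: module_hom_iff module_axioms clin_def)

sublocale inv_al: module_hom scale scale "inv al"
proof -
  have "inv al (x + y) = inv al x + inv al y" "inv al (scale c x) = scale c (inv al x)" for c x y
    by (metis al.add al_inv inv_al, metis al.scale al_inv inv_al)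
  then show "module_hom scale scale (inv al)" by (simp add: module_hom_iff module_axioms)
qed

sublocale inv_be: module_hom scale scale "inv be"
proof -
  have "inv be (x + y) = inv be x + inv be y" "inv be (scale c x) = scale c (inv be x)" for c x y
    by (metis be.add be_inv inv_be, metis be.scale be_inv inv_be)
  then show "module_hom scale scale (inv be)" by (simp add: module_hom_iff module_axioms)
qed

lemma inv_al_commute: "(\<And>x. f (al x) = al (f x)) \<Longrightarrow> f (inv al x) = inv al (f x)"
  by (metis al_inv inv_al)

lemma inv_be_commute: "(\<And>x. f (be x) = be (f x)) \<Longrightarrow> f (inv be x) = inv be (f x)"
  by (metis be_inv inv_be)

lemma inv_al_be: "inv al (be x) = be (inv al x)"
  by (rule inv_al_commute[symmetric]) (simp add: al_be)

lemma inv_be_al: "inv be (al x) = al (inv be x)"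
  by (rule inv_be_commute[symmetric]) (simp add: al_be)

lemma inv_al_inv_be: "inv al (inv be x) = inv be (inv al x)"
  by (rule inv_al_commute[symmetric]) (simp add: inv_be_al)

lemma inv_al_D: "inv al (D x) = D (inv al x)"
  by (rule inv_al_commute[symmetric]) (simp add: al_D)

lemma inv_be_D: "inv be (D x) = D (inv be x)"
  by (rule inv_be_commute[symmetric]) (simp add: be_D)

lemma inv_al_m: "inv al (m a b n) = m (inv al a) (inv al b) n"
  by (metis al_inv al_m inv_al)

lemma inv_be_m: "inv be (m a b n) = m (inv be a) (inv be b) n"
  by (metis be_inv be_m inv_be)

lemma inv_al_Rg: "i < 2 \<Longrightarrow> x \<in> Rg i \<Longrightarrow> inv al x \<in> Rg i"
  by (rule graded_inverse[where f = al]) (simp_all add: al.add al_Rg)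

lemma inv_be_Rg: "i < 2 \<Longrightarrow> x \<in> Rg i \<Longrightarrow> inv be x \<in> Rg i"
  by (rule graded_inverse[where f = be]) (simp_all add: be.add be_Rg)

lemma gcomp_al: "i < 2 \<Longrightarrow> gcomp Rg i (al a) = al (gcomp Rg i a)"
  by (rule gcomp_map) (simp_all add: al.diff al_Rg)

lemma gcomp_be: "i < 2 \<Longrightarrow> gcomp Rg i (be a) = be (gcomp Rg i a)"
  by (rule gcomp_map) (simp_all add: be.diff be_Rg)

lemma m_finite: "finite_coeffs (m a b)"
  using m_lprod by (simp add: graded_lprod_def finite_coeffs_def)

lemma m_add_left: "m (x + y) b n = m x b n + m y b n"
  and m_scale_left: "m (scale c x) b n = scale c (m x b n)"
  and m_add_right: "m a (x + y) n = m a x n + m a y n"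
  and m_scale_right: "m a (scale c x) n = scale c (m a x n)"
  using m_lprod by (simp_all add: graded_lprod_def clin_def)

lemma m_Rg: "i < 2 \<Longrightarrow> j < 2 \<Longrightarrow> a \<in> Rg i \<Longrightarrow> b \<in> Rg j \<Longrightarrow> m a b n \<in> Rg ((i + j) mod 2)"
  using m_lprod by (simp add: graded_lprod_def)

definition untwisted :: "'r \<Rightarrow> 'r \<Rightarrow> nat \<Rightarrow> 'r" where
  "untwisted x y = m (inv al x) (inv be y)"

lemma untwisted_assoc:
  "lmul untwisted x (untwisted y z) = plus_subst scale untwisted (untwisted x y) z"
proof -
  have "lmul untwisted x (untwisted y z) a b
      = m (al (inv al (inv al x))) (m (inv be (inv al y)) (inv be (inv be z)) b) a" for a b
    by (simp add: lmul_def untwisted_def inv_be_m)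
  also have "\<dots> a b
      = plus_subst scale m (m (inv al (inv al x)) (inv be (inv al y))) (be (inv be (inv be z))) a b"
    for a b by (rule m_assoc)
  also have "\<dots> a b = plus_subst scale untwisted (untwisted x y) z a b" for a b
    by (simp add: plus_subst_def untwisted_def inv_al_m inv_al_inv_be)
  finally show ?thesis by (simp add: fun_eq_iff)
qed

sublocale untwisted: assoc_conf_algebra scale D untwisted
proof
  show "bilinear_lprod untwisted"
    by (simp add: bilinear_lprod_def untwisted_def m_finite fun_eq_iff m_add_left m_add_right
        m_scale_left m_scale_right inv_al.add inv_be.add inv_al.scale inv_be.scale)
  show "sesqui_left untwisted"
    by (simp add: sesqui_left_def untwisted_def inv_al_D m_D_left fun_eq_iff)
  show "sesqui_right untwisted"
    by (simp add: sesqui_right_def untwisted_def inv_be_D m_D_right fun_eq_iff)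
qed (rule untwisted_assoc)

abbreviation bracket :: "'r \<Rightarrow> 'r \<Rightarrow> nat \<Rightarrow> 'r" where
  "bracket \<equiv> induced_bracket scale D Rg m al be"

lemma bracket_eq_super_bracket: "bracket a b n = super_bracket untwisted (al a) (be b) n"
  by (simp add: induced_bracket_def super_bracket_def opposite_def untwisted_def gcomp_al gcomp_be
      inv_al_be inv_be_al)

lemma bracket_fun_eq: "bracket a b = super_bracket untwisted (al a) (be b)"
  by (simp add: fun_eq_iff bracket_eq_super_bracket)

lemma untwisted_Rg:
  "i < 2 \<Longrightarrow> j < 2 \<Longrightarrow> x \<in> Rg i \<Longrightarrow> y \<in> Rg j \<Longrightarrow> untwisted x y n \<in> Rg ((i + j) mod 2)"
  by (simp add: untwisted_def m_Rg inv_al_Rg inv_be_Rg)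

lemma al_untwisted: "al (untwisted x y n) = untwisted (al x) (al y) n"
  by (simp add: untwisted_def al_m inv_be_al)

lemma be_untwisted: "be (untwisted x y n) = untwisted (be x) (be y) n"
  by (simp add: untwisted_def be_m inv_al_be)

lemma bracket_homogeneous:
  assumes "i < 2" and "j < 2" and "a \<in> Rg i" and "b \<in> Rg j"
  shows "bracket a b n = commutator untwisted ((-1) ^ (i * j)) (al a) (be b) n"
  using assms
  by (simp add: bracket_eq_super_bracket super_bracket_homogeneous untwisted.M_bilinear al_Rg be_Rg)

lemma commutator_untwisted_Rg:
  assumes "i < 2" and "j < 2" and "u \<in> Rg i" and "v \<in> Rg j"
  shows "commutator untwisted ((-1) ^ (i * j)) u v n \<in> Rg ((i + j) mod 2)"
  using super_bracket_Rg[OF untwisted.M_bilinear untwisted_Rg assms]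
    super_bracket_homogeneous[OF untwisted.M_bilinear assms] by simp

lemma bracket_Rg:
  "i < 2 \<Longrightarrow> j < 2 \<Longrightarrow> a \<in> Rg i \<Longrightarrow> b \<in> Rg j \<Longrightarrow> bracket a b n \<in> Rg ((i + j) mod 2)"
  by (simp add: bracket_homogeneous commutator_untwisted_Rg al_Rg be_Rg)

lemma al_commutator: "al (commutator untwisted s u v n) = commutator untwisted s (al u) (al v) n"
  by (rule commutator_map[OF al.module_hom_axioms])
     (simp_all add: al_D al_untwisted untwisted.M_bilinear)

lemma be_commutator: "be (commutator untwisted s u v n) = commutator untwisted s (be u) (be v) n"
  by (rule commutator_map[OF be.module_hom_axioms]) (simp_all add: be_D be_untwisted untwisted.M_bilinear)

lemma bracket_graded_lprod: "graded_lprod scale Rg bracket"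
  unfolding graded_lprod_def
proof (intro conjI allI impI ballI)
  show "finite {n. bracket a b n \<noteq> 0}" for a b
    using finite_coeffs_super_bracket[OF untwisted.M_bilinear]
    by (simp add: bracket_fun_eq finite_coeffs_def)
  show "clin scale (\<lambda>a. bracket a b n)" for b n
    by (simp add: clin_def bracket_eq_super_bracket al.add al.scale
        super_bracket_add_left[OF untwisted.M_bilinear] super_bracket_scale_left[OF untwisted.M_bilinear])
  show "clin scale (\<lambda>b. bracket a b n)" for a n
    by (simp add: clin_def bracket_eq_super_bracket be.add be.scale
        super_bracket_add_right[OF untwisted.M_bilinear] super_bracket_scale_right[OF untwisted.M_bilinear])
  show "bracket a b n \<in> Rg ((i + j) mod 2)" if "i < 2" "j < 2" "a \<in> Rg i" "b \<in> Rg j" for i j a b n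
    using that by (rule bracket_Rg)
qed

lemma al_bracket: "al (bracket a b n) = bracket (al a) (al b) n"
  by (simp add: bracket_eq_super_bracket super_bracket_map[OF untwisted.M_bilinear al.module_hom_axioms]
      al_D al_Rg al_untwisted al_be)

lemma be_bracket: "be (bracket a b n) = bracket (be a) (be b) n"
  by (simp add: bracket_eq_super_bracket super_bracket_map[OF untwisted.M_bilinear be.module_hom_axioms]
      be_D be_Rg be_untwisted al_be)

lemma bracket_D_left: "bracket (D a) b n = - shiftL (bracket a b) n"
  by (simp add: bracket_fun_eq al_D super_bracket_D_left untwisted.M_bilinear untwisted.M_sesqui_left
      untwisted.M_sesqui_right)

lemma bracket_D_right: "bracket a (D b) n = D (bracket a b n) + shiftL (bracket a b) n"
  by (simp add: bracket_fun_eq be_D super_bracket_D_right untwisted.M_bilinear untwisted.M_sesqui_left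
      untwisted.M_sesqui_right)

lemma bracket_skew:
  assumes "i < 2" and "j < 2" and "a \<in> Rg i" and "b \<in> Rg j"
  shows "bracket (be a) (al b) n = - scale ((-1) ^ (i * j)) (sneg (bracket (be b) (al a)) n)"
proof -
  let ?s = "(-1::complex) ^ (i * j)"
  have "bracket (be a) (al b) n = commutator untwisted ?s (al (be a)) (al (be b)) n"
    using assms by (simp add: bracket_homogeneous al_Rg be_Rg al_be)
  moreover have "bracket (be b) (al a) = commutator untwisted ?s (al (be b)) (al (be a))"
    using assms by (simp add: fun_eq_iff bracket_homogeneous al_Rg be_Rg al_be mult.commute)
  ultimately show ?thesis
    using commutator_skew[OF untwisted.M_bilinear koszul_signs(4)[OF assms(1,2,1)]] by simp
qed

lemma bracket_jacobi:
  assumes i: "i < 2" and j: "j < 2" and k: "k < 2"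
    and a: "a \<in> Rg i" and b: "b \<in> Rg j" and c: "c \<in> Rg k"
  shows "bracket (al (be a)) (bracket b c q) p
     = plus_subst scale bracket (bracket (be a) b) (be c) p q
       + scale ((-1) ^ (i * j)) (bracket (be b) (bracket (al a) c p) q)"
proof -
  let ?X = "al (al (be a))" and ?Y = "al (be b)" and ?Z = "be (be c)"
  let ?a = "(-1::complex) ^ (i * j)" and ?b = "(-1::complex) ^ (i * k)"
    and ?c = "(-1::complex) ^ (j * k)"
  have ij: "(i + j) mod 2 < 2" and jk: "(j + k) mod 2 < 2" and ik: "(i + k) mod 2 < 2" by simp_all
  have lhs: "bracket (al (be a)) (bracket b c q) p
      = commutator untwisted (?a * ?b) ?X (commutator untwisted ?c ?Y ?Z q) p"
    using bracket_homogeneous[OF i jk al_Rg[OF i be_Rg[OF i a]] bracket_Rg[OF j k b c]]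
    by (simp add: bracket_homogeneous[OF j k b c] be_commutator al_be koszul_signs(1)[OF i j k])
  have "bracket (commutator untwisted ?a (al (be a)) (be b) t) (be c)
      = commutator untwisted (?b * ?c) (commutator untwisted ?a ?X ?Y t) ?Z" for t
    using commutator_untwisted_Rg[OF i j al_Rg[OF i be_Rg[OF i a]] be_Rg[OF j b]]
    by (simp add: fun_eq_iff bracket_homogeneous[OF ij k _ be_Rg[OF k c]] al_commutator
        koszul_signs(2)[OF i j k])
  then have rhs1: "plus_subst scale bracket (bracket (be a) b) (be c) p q
      = plus_subst scale (commutator untwisted (?b * ?c)) (commutator untwisted ?a ?X ?Y) ?Z p q"
    by (simp add: plus_subst_def bracket_homogeneous[OF i j be_Rg[OF i a] b])
  have rhs2: "bracket (be b) (bracket (al a) c p) q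
      = commutator untwisted (?a * ?c) ?Y (commutator untwisted ?b ?X ?Z p) q"
    using bracket_homogeneous[OF j ik be_Rg[OF j b] bracket_Rg[OF i k al_Rg[OF i a] c]]
    by (simp add: bracket_homogeneous[OF i k al_Rg[OF i a] c] be_commutator al_be koszul_signs(3)[OF i j k])
  show ?thesis
    unfolding lhs rhs1 rhs2 by (rule untwisted.commutator_jacobi[OF koszul_signs(4)[OF i j k]])
qed

end

theorem mainTheorem5:
  fixes scale :: "complex \<Rightarrow> 'r::ab_group_add \<Rightarrow> 'r"
    and D al be :: "'r \<Rightarrow> 'r"
    and Rg :: "nat \<Rightarrow> 'r set"
    and m :: "'r \<Rightarrow> 'r \<Rightarrow> nat \<Rightarrow> 'r"
  assumes "regular_BiHom_assoc_conf_super scale D Rg m al be"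
  shows "BiHom_Lie_conf_super scale D Rg (induced_bracket scale D Rg m al be) al be"
proof -
  have graded: "graded_CD_module scale D Rg"
    and structure_maps: "clin scale al" "clin scale be" "al \<circ> be = be \<circ> al"
      "al \<circ> D = D \<circ> al" "be \<circ> D = D \<circ> be"
    using assms unfolding regular_BiHom_assoc_conf_super_def BiHom_assoc_conf_super_def by auto
  have "module scale" using graded by (simp add: graded_CD_module_def vector_space_def module_def)
  moreover have "module_hom scale scale D"
    using graded \<open>module scale\<close> by (simp add: graded_CD_module_def module_hom_iff clin_def)
  ultimately interpret regular_bihom_assoc scale D Rg m al be
    using graded assms
    by (simp add: regular_bihom_assoc_def regular_bihom_assoc_axioms_def graded_cderiv_module_def
        graded_cderiv_module_axioms_def cderiv_module_def)
  show ?thesis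
    unfolding BiHom_Lie_conf_super_def
    using graded bracket_graded_lprod structure_maps
    by (simp add: al_bracket be_bracket bracket_D_left bracket_D_right bracket_skew bracket_jacobi)
qed

end
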